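(* The $\mathrm{E}$-halting language $H_{\mathrm E}=\{\langle 0^i,x\rangle : M_i\text{ accepts }x\}$ is polynomial-time deep.
   Context: $\mathrm{E}=\bigcup_c\mathrm{DTIME}(2^{cn})$. Fix a standard linear-time computable invertible pairing $(x,y)\mapsto\langle x,y\rangle$ of strings, and an enumeration $M_1,M_2,\dots$ of machines deciding languages in $\mathrm E$, where $M_i$ runs in time $2^{i|x|}$ on input $x$. $s_0=\lambda,s_1,\dots$ is the length-lexicographic enumeration of $\{0,1\}^*$ with order $\le$; languages are identified with characteristic sequences, $L\upharpoonright n$ is the first $n$ bits of $\chi_L$ and $L(x)\in\{0,1\}$ indicates membership. An oblivious predictor is $P:\{0,1\}^*\times\{0,1\}\to[0,1]$ with $P(x,0)+P(x,1)=1$, polynomial-time if $P(s_n,b)$ is computable in time polynomial in $n$; its pom is $p(L\upharpoonright n)=2^n\prod_{y\le s_n}P(y,L(y))$. $L$ is polynomial-time deep if there exists $a>0$ such that for every pom $p$ there is a pom $p'$ with $p'(L\upharpoonright n)/p(L\upharpoonright n)\ge a\log n$ for infinitely many $n$ (convention $1/0=\infty$). *)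

theory Defs
  imports Complex_Main
begin

text \<open>Strings over {0,1} are bool lists (False = 0, True = 1). Languages are sets of strings.\<close>

text \<open>bin m = binary representation of m (msb first) with the leading 1 removed (for m >= 1).
  Then s n = bin (n+1) is the length-lexicographic enumeration s_0 = lambda, s_1 = 0, s_2 = 1, s_3 = 00, ...\<close>
fun bin :: "nat \<Rightarrow> bool list" where
  "bin m = (if m \<le> 1 then [] else bin (m div 2) @ [odd m])"

definition s :: "nat \<Rightarrow> bool list" where
  "s n = bin (n + 1)"

definition bits_val :: "bool list \<Rightarrow> nat" where
  "bits_val xs = foldl (\<lambda>acc b. 2 * acc + (if b then 1 else 0)) 0 xs"

definition pair :: "bool list \<Rightarrow> bool list \<Rightarrow> bool list" where
  "pair x y = concat (map (\<lambda>b. [b, b]) x) @ [False, True] @ y"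

datatype sym = Bl | S0 | S1
datatype dir = MoveL | MoveR | Stay

text \<open>States are 0..<nstates; 0 is the start state, 1 the halting state.\<close>
record tm =
  nstates :: nat
  delta :: "nat \<Rightarrow> sym \<Rightarrow> nat \<times> sym \<times> dir"

definition tm_wf :: "tm \<Rightarrow> bool" where
  "tm_wf M \<longleftrightarrow> nstates M \<ge> 2 \<and> (\<forall>q < nstates M. \<forall>a. fst (delta M q a) < nstates M)"

text \<open>Configuration: (state, cells left of the head in reverse order, head cell and cells to the right).\<close>
type_synonym config = "nat \<times> sym list \<times> sym list"

definition head_sym :: "sym list \<Rightarrow> sym" where
  "head_sym r = (case r of [] \<Rightarrow> Bl | a # _ \<Rightarrow> a)"

definition tm_step :: "tm \<Rightarrow> config \<Rightarrow> config" where
  "tm_step M c = (case c of (q, l, r) \<Rightarrow>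
     if q = 1 then (q, l, r) else
     (case delta M q (head_sym r) of (q', w, d) \<Rightarrow>
       (case d of
          Stay \<Rightarrow> (q', l, w # tl r)
        | MoveR \<Rightarrow> (q', w # l, tl r)
        | MoveL \<Rightarrow> (case l of [] \<Rightarrow> (q', [], Bl # w # tl r)
                             | a # l' \<Rightarrow> (q', l', a # w # tl r)))))"

definition tm_run :: "tm \<Rightarrow> nat \<Rightarrow> config \<Rightarrow> config" where
  "tm_run M t c = (tm_step M ^^ t) c"

definition enc :: "bool list \<Rightarrow> sym list" where
  "enc x = map (\<lambda>b. if b then S1 else S0) x"

definition init_conf :: "bool list \<Rightarrow> config" where
  "init_conf x = (0, [], enc x)"

definition halted :: "config \<Rightarrow> bool" where
  "halted c \<longleftrightarrow> fst c = 1"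

definition tm_output :: "config \<Rightarrow> bool list" where
  "tm_output c = map (\<lambda>a. a = S1) (takeWhile (\<lambda>a. a \<noteq> Bl) (snd (snd c)))"

definition runs_in :: "tm \<Rightarrow> (nat \<Rightarrow> nat) \<Rightarrow> bool" where
  "runs_in M t \<longleftrightarrow> (\<forall>x. halted (tm_run M (t (length x)) (init_conf x)) \<and>
                         tm_output (tm_run M (t (length x)) (init_conf x)) \<in> {[True], [False]})"

definition tm_accepts :: "tm \<Rightarrow> bool list \<Rightarrow> bool" where
  "tm_accepts M x \<longleftrightarrow> (\<exists>t. halted (tm_run M t (init_conf x)) \<and> tm_output (tm_run M t (init_conf x)) = [True])"

definition tm_lang :: "tm \<Rightarrow> bool list set" where
  "tm_lang M = {x. tm_accepts M x}"

text \<open>E = union over c of DTIME(2^(cn)) (constant factors absorbed).\<close>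
definition E_class :: "bool list set set" where
  "E_class = {L. \<exists>M c. tm_wf M \<and> runs_in M (\<lambda>m. c * 2 ^ (c * m) + c) \<and> tm_lang M = L}"

text \<open>The E-halting language for an enumeration M_1, M_2, ... (index 0 unused).\<close>
definition H_E :: "(nat \<Rightarrow> tm) \<Rightarrow> bool list set" where
  "H_E M = {pair (replicate i False) x | i x. i \<ge> 1 \<and> tm_accepts (M i) x}"

definition ptime_pred :: "(bool list \<Rightarrow> bool \<Rightarrow> real) \<Rightarrow> bool" where
  "ptime_pred P \<longleftrightarrow>
     (\<forall>x. P x False + P x True = 1 \<and> (\<forall>b. 0 \<le> P x b \<and> P x b \<le> 1)) \<and>
     (\<exists>M k. tm_wf M \<and> (\<forall>n b. \<exists>u v.
        halted (tm_run M (k * n ^ k + k) (init_conf (pair (s n) [b]))) \<and>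
        tm_output (tm_run M (k * n ^ k + k) (init_conf (pair (s n) [b]))) = pair u v \<and>
        bits_val v > 0 \<and> P (s n) b = real (bits_val u) / real (bits_val v)))"

definition pom :: "(bool list \<Rightarrow> bool \<Rightarrow> real) \<Rightarrow> bool list set \<Rightarrow> nat \<Rightarrow> real" where
  "pom P L n = 2 ^ n * (\<Prod>i<n. P (s i) (s i \<in> L))"

text \<open>x / y >= r with the convention (positive)/0 = infinity.\<close>
definition ratio_ge :: "real \<Rightarrow> real \<Rightarrow> real \<Rightarrow> bool" where
  "ratio_ge x y r \<longleftrightarrow> (if y = 0 then x > 0 else x / y \<ge> r)"

definition ptime_deep :: "bool list set \<Rightarrow> bool" where
  "ptime_deep L \<longleftrightarrow> (\<exists>a > 0. \<forall>P. ptime_pred P \<longrightarrow>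
      (\<exists>P'. ptime_pred P' \<and> (\<exists>\<^sub>\<infinity>n. ratio_ge (pom P' L n) (pom P L n) (a * log 2 (real n)))))"

end

(*
  Let P be a polynomial-time predictor, computed by a machine MP.  If P gives probability 0 to
  a bit of H_E, the constant predictor 1/2 beats it by an infinite factor.  Otherwise consider
  the machine D that on input y = 0^k 1 w runs MP on the string <0^k, y> and accepts iff P gives
  the answer "member" probability at most 1/2.  D runs in exponential time, so D = M_j for some
  j, and on the special strings <0^j, 0^j 1 w> membership in H_E is always the bit that P
  considers at most as likely as its negation.  The predictor that agrees with P except on
  special strings, where it computes that bit (by running MP) and bets everything on it, gains
  a factor 2 on each special string.  Among the first 2^(3j+t+4) - 1 strings at least 2^t are
  special, so the gain exceeds log n infinitely often.
*)
theory Submission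
  imports Defs "HOL-Library.Countable"
begin

section \<open>Enumeration and pairing of strings\<close>

declare bin.simps[simp del]

definition num_of_bin :: "bool list \<Rightarrow> nat" where
  "num_of_bin xs = foldl (\<lambda>acc b. 2 * acc + (if b then 1 else 0)) 1 xs"

lemma num_of_bin_snoc: "num_of_bin (xs @ [b]) = 2 * num_of_bin xs + (if b then 1 else 0)"
  by (simp add: num_of_bin_def)

lemma num_of_bin_pos: "num_of_bin xs \<ge> 1"
  by (induct xs rule: rev_induct) (auto simp: num_of_bin_snoc num_of_bin_def[of "[]"])

lemma bin_num_of_bin: "bin (num_of_bin xs) = xs"
proof (induct xs rule: rev_induct)
  case Nil show ?case by (simp add: num_of_bin_def bin.simps)
next
  case (snoc b xs)
  have p: "num_of_bin xs \<ge> 1" by (rule num_of_bin_pos)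
  have "num_of_bin (xs @ [b]) div 2 = num_of_bin xs" by (simp add: num_of_bin_snoc)
  moreover have "odd (num_of_bin (xs @ [b])) = b" by (simp add: num_of_bin_snoc)
  moreover have "\<not> num_of_bin (xs @ [b]) \<le> 1" using p by (simp add: num_of_bin_snoc)
  ultimately show ?case using snoc by (subst bin.simps) simp
qed

lemma num_of_bin_bin: "m \<ge> 1 \<Longrightarrow> num_of_bin (bin m) = m"
proof (induct m rule: bin.induct)
  case (1 m)
  show ?case
  proof (cases "m \<le> 1")
    case True then show ?thesis using 1 by (simp add: bin.simps num_of_bin_def)
  next
    case False
    then have "num_of_bin (bin (m div 2)) = m div 2" using 1 by auto
    then have "num_of_bin (bin (m div 2) @ [odd m]) = m" by (simp add: num_of_bin_snoc)
    then show ?thesis using False unfolding bin.simps[of m] by simp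
  qed
qed

lemma length_bin: "m \<ge> 1 \<Longrightarrow> 2 ^ length (bin m) \<le> m \<and> m < 2 ^ (length (bin m) + 1)"
proof (induct m rule: bin.induct)
  case (1 m)
  show ?case
  proof (cases "m \<le> 1")
    case True then show ?thesis using 1 by (simp add: bin.simps)
  next
    case False
    then have "2 ^ length (bin (m div 2)) \<le> m div 2 \<and> m div 2 < 2 ^ (length (bin (m div 2)) + 1)"
      using 1 by auto
    moreover have "m \<le> 2 * (m div 2) + 1" "2 * (m div 2) \<le> m" by auto
    ultimately have "2 ^ (length (bin (m div 2)) + 1) \<le> m \<and> m < 2 ^ (length (bin (m div 2)) + 2)"
      by (simp add: power2_eq_square) linarith
    then show ?thesis using False unfolding bin.simps[of m] by simp
  qed
qed

definition str_index :: "bool list \<Rightarrow> nat" where "str_index x = num_of_bin x - 1"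

lemma s_str_index[simp]: "s (str_index x) = x"
  using num_of_bin_pos[of x] by (simp add: s_def str_index_def bin_num_of_bin)

lemma str_index_s[simp]: "str_index (s n) = n"
  by (simp add: s_def str_index_def num_of_bin_bin)

lemma str_index_bound: "str_index x < 2 ^ (length x + 1) - 1"
proof -
  have "num_of_bin x < 2 ^ (length x + 1)"
      using length_bin[of "num_of_bin x"] num_of_bin_pos[of x] by (simp add: bin_num_of_bin)
  then show ?thesis using num_of_bin_pos[of x] unfolding str_index_def by linarith
qed

lemma s_length_le: "length (s n) \<le> n"
proof -
  have "2 ^ length (s n) \<le> n + 1" using length_bin[of "n+1"] by (simp add: s_def)
  moreover have "length (s n) < 2 ^ length (s n)" by (rule less_exp)
  ultimately show ?thesis by linarith
qed

definition double_bits :: "bool list \<Rightarrow> bool list" where "double_bits x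
    = concat (map (\<lambda>b. [b, b]) x)"

lemma double_bits_simps[simp]: "double_bits [] = []" "double_bits (b # x)
    = b # b # double_bits x" "double_bits (x @ y) = double_bits x @ double_bits y"
  by (simp_all add: double_bits_def)
lemma length_double_bits[simp]: "length (double_bits x) = 2 * length x"
  by (induct x) auto

lemma double_bits_replicate[simp]: "double_bits (replicate k b) = replicate (2 * k) b"
  by (induct k) auto

lemma pair_eq_double_bits: "pair x y = double_bits x @ [False, True] @ y"
  by (simp add: pair_def double_bits_def)

lemma double_bits_sep_inj: "double_bits x @ False # True # y = double_bits x' @ False # True # y'
    \<Longrightarrow> x = x' \<and> y = y'"
proof (induct x arbitrary: x')
  case Nil then show ?case 
  proof (cases x')
    case (Cons c z) then show ?thesis using Nil by (cases c) auto
  qed simp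
next
  case (Cons b x) then show ?case
  proof (cases x')
    case Nil then show ?thesis using Cons by (cases b) auto
  next
    case (Cons c z) then show ?thesis using Cons.prems Cons.hyps by auto
  qed
qed

lemma pair_eq_double_bits': "pair x y = double_bits x @ False # True # y"
  by (simp add: pair_eq_double_bits)

lemma pair_inj: "pair x y = pair x' y' \<Longrightarrow> x = x' \<and> y = y'"
  unfolding pair_eq_double_bits' by (rule double_bits_sep_inj)

section \<open>Machines over an arbitrary state type\<close>

type_synonym 'q gconf = "'q \<times> sym list \<times> sym list"

definition mvstep :: "'q \<Rightarrow> sym \<Rightarrow> dir \<Rightarrow> sym list \<Rightarrow> sym list \<Rightarrow> 'q gconf" where
  "mvstep q' w d l r = (case d of Stay \<Rightarrow> (q', l, w # tl r) | MoveR \<Rightarrow> (q', w # l, tl r)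
     | MoveL \<Rightarrow> (q', tl l, head_sym l # w # tl r))"

definition gstep :: "('q \<Rightarrow> sym \<Rightarrow> 'q \<times> sym \<times> dir) \<Rightarrow> 'q \<Rightarrow> 'q gconf \<Rightarrow> 'q gconf" where
  "gstep \<delta> h c = (case c of (q, l, r) \<Rightarrow> if q = h then c else
      (case \<delta> q (head_sym r) of (q', w, d) \<Rightarrow> mvstep q' w d l r))"

definition grun :: "('q \<Rightarrow> sym \<Rightarrow> 'q \<times> sym \<times> dir) \<Rightarrow> 'q \<Rightarrow> nat \<Rightarrow> 'q gconf \<Rightarrow> 'q gconf" where
  "grun \<delta> h t c = (gstep \<delta> h ^^ t) c"

lemma head_sym_simps[simp]: "head_sym [] = Bl" "head_sym (a # r) = a"
  by (simp_all add: head_sym_def)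

lemma grun_0[simp]: "grun \<delta> h 0 c = c" by (simp add: grun_def)
lemma grun_Suc: "grun \<delta> h (Suc t) c = grun \<delta> h t (gstep \<delta> h c)"
  by (simp only: grun_def funpow_Suc_right o_apply)
lemma grun_Suc': "grun \<delta> h (Suc t) c = gstep \<delta> h (grun \<delta> h t c)"
  by (simp add: grun_def)
lemma grun_add: "grun \<delta> h (a + b) c = grun \<delta> h b (grun \<delta> h a c)"
  by (simp only: grun_def funpow_add add.commute[of a b] o_apply)

lemma gstep_halt[simp]: "gstep \<delta> h (h, l, r) = (h, l, r)"
  by (simp add: gstep_def)
lemma grun_halt[simp]: "grun \<delta> h t (h, l, r) = (h, l, r)"
  by (induct t) (simp_all add: grun_Suc)

lemma grun_halt_mono: "fst (grun \<delta> h t c) = h \<Longrightarrow> t \<le> t' \<Longrightarrow> grun \<delta> h t' c = grun \<delta> h t c"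
proof -
  assume a: "fst (grun \<delta> h t c) = h" "t \<le> t'"
  then obtain d where "t' = t + d" by (metis le_iff_add)
  moreover obtain l r where "grun \<delta> h t c = (h, l, r)" using a by (metis prod.collapse)
  ultimately show ?thesis by (simp add: grun_add)
qed

lemma mvstep_simps[simp]:
  "mvstep q' w Stay l r = (q', l, w # tl r)"
  "mvstep q' w MoveR l r = (q', w # l, tl r)"
  "mvstep q' w MoveL l r = (q', tl l, head_sym l # w # tl r)"
  by (simp_all add: mvstep_def)

definition reach :: "('q \<Rightarrow> sym \<Rightarrow> 'q \<times> sym \<times> dir) \<Rightarrow> 'q \<Rightarrow> 'q gconf \<Rightarrow> 'q gconf \<Rightarrow> nat \<Rightarrow> bool" where
  "reach \<delta> h c c' B \<longleftrightarrow> (\<exists>t \<le> B. grun \<delta> h t c = c')"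

lemma reach_refl: "reach \<delta> h c c 0" by (auto simp: reach_def)
lemma reach_trans: "reach \<delta> h c c' B1 \<Longrightarrow> reach \<delta> h c' c'' B2 \<Longrightarrow> reach \<delta> h c c'' (B1 + B2)"
  unfolding reach_def by (metis add_le_mono grun_add)
lemma reach_mono: "reach \<delta> h c c' B \<Longrightarrow> B \<le> B' \<Longrightarrow> reach \<delta> h c c' B'"
  unfolding reach_def using le_trans by blast
lemma reach_run: "grun \<delta> h t c = c' \<Longrightarrow> reach \<delta> h c c' t"
  unfolding reach_def by auto
lemma reach_step: "gstep \<delta> h c = c' \<Longrightarrow> reach \<delta> h c c' 1"
  unfolding reach_def by (rule exI[of _ 1]) (simp add: grun_Suc)

lemma scanR:
  assumes "q \<noteq> h" "\<forall>a\<in>set xs. \<delta> q a = (q, a, MoveR)"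
  shows "grun \<delta> h (length xs) (q, l, xs @ r) = (q, rev xs @ l, r)"
  using assms(2)
proof (induct xs arbitrary: l)
  case Nil then show ?case by simp
next
  case (Cons x xs)
  have "gstep \<delta> h (q, l, (x # xs) @ r) = (q, x # l, xs @ r)"
    using Cons.prems assms(1) by (simp add: gstep_def)
  then show ?case using Cons by (simp add: grun_Suc)
qed

lemma scanL:
  assumes "q \<noteq> h" "\<forall>a\<in>set (x # xs). \<delta> q a = (q, a, MoveL)"
  shows "grun \<delta> h (Suc (length xs)) (q, rev xs @ l, x # r) = (q, tl l, head_sym l # xs @ x # r)"
  using assms(2)
proof (induct xs arbitrary: x r rule: rev_induct)
  case Nil
  then show ?case using assms(1) by (simp add: gstep_def grun_Suc)
next
  case (snoc z xs)
  have "gstep \<delta> h (q, rev (xs @ [z]) @ l, x # r) = (q, rev xs @ l, z # x # r)"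
    using snoc.prems assms(1) by (simp add: gstep_def)
  moreover have "grun \<delta> h (Suc (length xs)) (q, rev xs @ l, z # x # r)
      = (q, tl l, head_sym l # xs @ z # x # r)"
    using snoc by auto
  ultimately show ?case by (simp add: grun_Suc)
qed

definition tape_length :: "'q gconf \<Rightarrow> nat" where
  "tape_length c = length (fst (snd c)) + length (snd (snd c))"

lemma tape_length_gstep: "tape_length (gstep \<delta> h c) \<le> tape_length c + 2"
  by (cases c) (auto simp: gstep_def tape_length_def mvstep_def split: prod.splits dir.splits)

lemma tape_length_grun: "tape_length (grun \<delta> h t c) \<le> tape_length c + 2 * t"
proof (induct t)
  case 0 then show ?case by simp
next
  case (Suc t) then show ?case using tape_length_gstep[of \<delta> h "grun \<delta> h t c"]
      by (simp add: grun_Suc')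
qed

section \<open>Simulating a machine\<close>

definition trim_blanks :: "sym list \<Rightarrow> sym list" where
  "trim_blanks xs = rev (dropWhile (\<lambda>a. a = Bl) (rev xs))"

lemma trim_blanks_Nil[simp]: "trim_blanks [] = []" by (simp add: trim_blanks_def)
lemma trim_blanks_Cons: "trim_blanks (a # xs)
    = (if a = Bl \<and> trim_blanks xs = [] then [] else a # trim_blanks xs)"
  by (auto simp: trim_blanks_def dropWhile_append)

lemma head_sym_trim_blanks: "head_sym (trim_blanks r) = head_sym r"
  by (cases r) (auto simp: trim_blanks_Cons)

lemma trim_blanks_tl: "trim_blanks (tl r) = tl (trim_blanks r)"
  by (cases r) (auto simp: trim_blanks_Cons)

lemma trim_blanks_eq_head: "trim_blanks r = trim_blanks r' \<Longrightarrow> head_sym r = head_sym r'"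
  by (metis head_sym_trim_blanks)

lemma trim_blanks_eq_tl: "trim_blanks r = trim_blanks r' \<Longrightarrow> trim_blanks (tl r) = trim_blanks (tl r')"
  by (simp add: trim_blanks_tl)

lemma trim_blanks_eq_Cons: "trim_blanks r = trim_blanks r' \<Longrightarrow> trim_blanks (a # r)
    = trim_blanks (a # r')"
  by (simp add: trim_blanks_Cons)

lemma trim_blanks_append_blanks: "\<forall>a\<in>set xs. a = Bl \<Longrightarrow> trim_blanks (ys @ xs) = trim_blanks ys"
  by (induct ys) (auto simp: trim_blanks_def dropWhile_append)

lemma trim_blanks_all_blank: "\<forall>a\<in>set xs. a = Bl \<Longrightarrow> trim_blanks xs = []"
  using trim_blanks_append_blanks[of xs "[]"] by simp

definition blank_eq :: "config \<Rightarrow> config \<Rightarrow> bool" where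
  "blank_eq c c' \<longleftrightarrow> fst c = fst c' \<and> trim_blanks (fst (snd c)) = trim_blanks (fst (snd c'))
      \<and> trim_blanks (snd (snd c)) = trim_blanks (snd (snd c'))"

lemma tm_step_alt: "tm_step M (q, l, r) = (if q = 1 then (q, l, r) else
   (case delta M q (head_sym r) of (q', w, d) \<Rightarrow> mvstep q' w d l r))"
  by (auto simp: tm_step_def mvstep_def split: prod.splits dir.splits list.splits)

lemma blank_eq_step: "blank_eq c c' \<Longrightarrow> blank_eq (tm_step M c) (tm_step M c')"
proof -
  assume b: "blank_eq c c'"
  obtain q l r where c: "c = (q, l, r)" by (metis prod.collapse)
  obtain q' l' r' where c': "c' = (q', l', r')" by (metis prod.collapse)
  have e: "q = q'" "trim_blanks l = trim_blanks l'" "trim_blanks r = trim_blanks r'" using b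
      by (auto simp: blank_eq_def c c')
  have hs: "head_sym r = head_sym r'" "head_sym l = head_sym l'"
      using trim_blanks_eq_head[OF e(3)] trim_blanks_eq_head[OF e(2)] by simp_all
  show ?thesis
  proof (cases "q = 1")
    case True then show ?thesis using b e by (simp add: c c' tm_step_alt)
  next
    case False
    obtain q2 w d where dd: "delta M q (head_sym r) = (q2, w, d)" by (metis prod.collapse)
    have s1: "tm_step M c = mvstep q2 w d l r" using False dd by (simp add: c tm_step_alt)
    have s2: "tm_step M c' = mvstep q2 w d l' r'" using False dd e hs by (simp add: c' tm_step_alt)
    have t1: "trim_blanks (tl r) = trim_blanks (tl r')" "trim_blanks (tl l) = trim_blanks (tl l')"
      using trim_blanks_eq_tl e by blast+
    have u1: "trim_blanks (w # tl r) = trim_blanks (w # tl r')"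
        by (rule trim_blanks_eq_Cons[OF t1(1)])
    have u2: "trim_blanks (w # l) = trim_blanks (w # l')" by (rule trim_blanks_eq_Cons[OF e(2)])
    have u3: "trim_blanks (head_sym l # w # tl r) = trim_blanks (head_sym l' # w # tl r')"
      unfolding hs(2) by (rule trim_blanks_eq_Cons[OF u1])
    show ?thesis unfolding s1 s2
      by (cases d) (simp_all only: blank_eq_def mvstep_simps fst_conv snd_conv u1 u2 u3 t1 e(2)
          simp_thms)
  qed
qed

lemma blank_eq_run: "blank_eq c c' \<Longrightarrow> blank_eq (tm_run M t c) (tm_run M t c')"
  by (induct t) (auto simp: tm_run_def blank_eq_step)

lemma takeWhile_trim_blanks: "takeWhile (\<lambda>a. a \<noteq> Bl) (trim_blanks r) = takeWhile (\<lambda>a. a \<noteq> Bl) r"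
  by (induct r) (auto simp: trim_blanks_Cons)

lemma blank_eq_output: "blank_eq c c' \<Longrightarrow> tm_output c = tm_output c'"
  unfolding blank_eq_def tm_output_def by (metis takeWhile_trim_blanks)

lemma blank_eq_halted: "blank_eq c c' \<Longrightarrow> halted c = halted c'"
  unfolding blank_eq_def halted_def by simp

lemma blank_eq_refl[simp]: "blank_eq c c" by (simp add: blank_eq_def)

lemma embed_run:
  fixes f :: "nat \<Rightarrow> 'q"
  assumes emb: "\<And>q a. q \<noteq> 1 \<Longrightarrow> \<delta> (f q) a = (case delta M q a of (q', w, d) \<Rightarrow> (f q', w, d))"
    and nh: "\<And>q. q \<noteq> 1 \<Longrightarrow> f q \<noteq> h"
  shows "(\<forall>t'<t. fst (tm_run M t' c) \<noteq> 1) \<Longrightarrow>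
     grun \<delta> h t (f (fst c), snd c) = (f (fst (tm_run M t c)), snd (tm_run M t c))"
proof (induct t)
  case 0 then show ?case by (simp add: tm_run_def)
next
  case (Suc t)
  obtain q l r where qt: "tm_run M t c = (q, l, r)" by (metis prod.collapse)
  have q1: "q \<noteq> 1" using Suc.prems qt by (metis fst_conv lessI)
  have ih: "grun \<delta> h t (f (fst c), snd c) = (f q, l, r)" using Suc qt by auto
  obtain q2 w d where dd: "delta M q (head_sym r) = (q2, w, d)" by (metis prod.collapse)
  have "gstep \<delta> h (f q, l, r) = mvstep (f q2) w d l r"
    using nh[OF q1] emb[OF q1, of "head_sym r"] dd by (simp add: gstep_def)
  moreover have "tm_run M (Suc t) c = mvstep q2 w d l r"
    using qt q1 dd by (simp add: tm_run_def tm_step_alt)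
  ultimately show ?case using ih
    by (cases d) (simp_all add: grun_Suc' mvstep_def)
qed

section \<open>The controller\<close>

(*
  One controller serves three purposes, selected by the mode.  In ModeDiag it is the diagonal
  machine: the D-states rewrite the input 0^k 1 w into pair (pair 0^k (0^k 1 w)) [True] (phase A
  doubles w and the leading 1 bit by bit, phase B doubles 0^k and leaves k marks, phase E turns
  the marks into 0^(4k)), MPc simulates the predictor machine, and the C-states compare its
  output pair u v and write the bit 2u <= v.  In ModePred the PR-states first run the automaton
  recognising special strings; on a special input it compares as in ModeDiag and writes the
  fraction 1 or 0, on any other input it keeps the output of the predictor machine.  In ModeHalf
  it writes the fraction 1/2.  Wr and Bk write a fixed word and return to its first cell.
*)

datatype tag = TP bool | TD
datatype mtag = MX tag | MY
datatype aut = ZA nat | ZB | ZC nat | ACC | REJ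
datatype mode = ModeDiag | ModePred | ModeHalf

datatype dst = DS1 | DS2 | DS3 | DS4 | DGR1 | DGR2 | DRD
  | BGR | BFZ | BFZ2 | BMK | BCL | BCO | BW2 | CSEP | CCO | CW1 | CW2 | CW3
  | EGR | EGR2 | ERD | ECL | ECO | EW2 | EW3 | EW4 | FCO

datatype cst = K0 | K1 | K2 | K3 sym | K4
  | RS bool bool | V0 bool bool | V1 bool bool | VR bool bool
  | VL bool bool bool bool | SLs bool bool bool bool
  | UU bool bool bool | UM bool | U0 bool bool bool | GoR bool

datatype st = Start | Halt | D dst
  | DCL sym bool | DCO sym bool | DW2 sym bool
  | PR aut | PR2 aut sym | PB aut | PL bool bool
  | MPc mtag nat | C tag cst | Wr "sym list" nat | Bk nat

fun aut_step :: "nat \<Rightarrow> aut \<Rightarrow> bool \<Rightarrow> aut" where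
  "aut_step j (ZA i) b = (if b then REJ else if i < 2 * j then ZA (Suc i) else ZB)"
| "aut_step j ZB b = (if b then ZC 0 else REJ)"
| "aut_step j (ZC i) b = (if b then (if j \<le> i then ACC else REJ) else
    (if i < j then ZC (Suc i) else REJ))"
| "aut_step j ACC b = ACC"
| "aut_step j REJ b = REJ"

definition tie_update :: "bool \<Rightarrow> bool \<Rightarrow> bool \<Rightarrow> bool" where
  "tie_update g a b = (if a = b then g else b)"

fun out_word :: "tag \<Rightarrow> bool \<Rightarrow> sym list" where
  "out_word TD g = [if g then S1 else S0]"
| "out_word (TP b) g = (if b = g then [S1, S1, S0, S1, S1] else [S0, S1, S1])"

fun sim_exit :: "mtag \<Rightarrow> st" where
  "sim_exit (MX t) = C t K0"
| "sim_exit MY = Halt"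

fun ctrl :: "mode \<Rightarrow> nat \<Rightarrow> tm \<Rightarrow> st \<Rightarrow> sym \<Rightarrow> st \<times> sym \<times> dir" where
  "ctrl md j MP Start a = (case md of ModeDiag \<Rightarrow> ((D DS1), a, MoveL) | ModePred
      \<Rightarrow> (PR (ZA 0), a, Stay)
      | ModeHalf \<Rightarrow> (Wr [S1, S1, S0, S1, S1, S0] 0, a, Stay))"
| "ctrl md j MP Halt a = (Halt, a, Stay)"
| "ctrl md j MP (D DS1) a = ((D DS2), Bl, MoveL)"
| "ctrl md j MP (D DS2) a = ((D DS3), S1, MoveL)"
| "ctrl md j MP (D DS3) a = ((D DS4), S1, MoveL)"
| "ctrl md j MP (D DS4) a = ((D DGR1), S0, Stay)"
| "ctrl md j MP (D DGR1) a = (if a = Bl then ((D DGR2), Bl, MoveR) else ((D DGR1), a, MoveR))"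
| "ctrl md j MP (D DGR2) a = (if a = Bl then ((D DRD), Bl, MoveL) else ((D DGR2), a, MoveR))"
| "ctrl md j MP (D DRD) a = (if a = Bl then (Wr [S0] 0, Bl, Stay) else (DCL a False, Bl, MoveL))"
| "ctrl md j MP (DCL c f) a = (if a = Bl then
      (if c = S0 \<and> \<not> f then (Wr [S0] 0, Bl, Stay) else (DCO c (\<not> f), Bl, MoveL))
      else (DCL c (f \<or> a = S1), a, MoveL))"
| "ctrl md j MP (DCO c ld) a = (if a = Bl then (DW2 c ld, c, MoveL) else (DCO c ld, a, MoveL))"
| "ctrl md j MP (DW2 c ld) a = ((if ld then (D BGR) else (D DGR1)), c, Stay)"
| "ctrl md j MP (D BGR) a = (if a = Bl then ((D BFZ), Bl, MoveR) else ((D BGR), a, MoveR))"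
| "ctrl md j MP (D BFZ) a = (if a = S0 then ((D BFZ2), S0, MoveR) else ((D CSEP), a, MoveL))"
| "ctrl md j MP (D BFZ2) a = (if a = S0 then ((D BFZ2), S0, MoveR) else ((D BMK), a, MoveL))"
| "ctrl md j MP (D BMK) a = ((D BCL), S1, MoveL)"
| "ctrl md j MP (D BCL) a = (if a = Bl then ((D BCO), Bl, MoveL) else ((D BCL), a, MoveL))"
| "ctrl md j MP (D BCO) a = (if a = Bl then ((D BW2), S0, MoveL) else ((D BCO), a, MoveL))"
| "ctrl md j MP (D BW2) a = ((D BGR), S0, Stay)"
| "ctrl md j MP (D CSEP) a = ((D CCO), a, MoveL)"
| "ctrl md j MP (D CCO) a = (if a = Bl then ((D CW1), S1, MoveL) else ((D CCO), a, MoveL))"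
| "ctrl md j MP (D CW1) a = ((D CW2), S1, MoveL)"
| "ctrl md j MP (D CW2) a = ((D CW3), S0, MoveL)"
| "ctrl md j MP (D CW3) a = ((D EGR), S0, Stay)"
| "ctrl md j MP (D EGR) a = (if a = Bl then ((D EGR2), Bl, MoveR) else ((D EGR), a, MoveR))"
| "ctrl md j MP (D EGR2) a = (if a = Bl then ((D ERD), Bl, MoveL) else ((D EGR2), a, MoveR))"
| "ctrl md j MP (D ERD) a = (if a = Bl then ((D FCO), Bl, MoveL) else ((D ECL), Bl, MoveL))"
| "ctrl md j MP (D ECL) a = (if a = Bl then ((D ECO), Bl, MoveL) else ((D ECL), a, MoveL))"
| "ctrl md j MP (D ECO) a = (if a = Bl then ((D EW2), S0, MoveL) else ((D ECO), a, MoveL))"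
| "ctrl md j MP (D EW2) a = ((D EW3), S0, MoveL)"
| "ctrl md j MP (D EW3) a = ((D EW4), S0, MoveL)"
| "ctrl md j MP (D EW4) a = ((D EGR), S0, Stay)"
| "ctrl md j MP (D FCO) a = (if a = Bl then (MPc (MX TD) 0, Bl, MoveR) else ((D FCO), a, MoveL))"
| "ctrl md j MP (PR \<sigma>) a = (if a = Bl then (Halt, a, Stay) else (PR2 \<sigma> a, a, MoveR))"
| "ctrl md j MP (PR2 \<sigma> c) a
    = (if a = c then (PR (aut_step j \<sigma> (c = S1)), a, MoveR) else (PB \<sigma>, a, MoveR))"
| "ctrl md j MP (PB \<sigma>) a
    = (if \<sigma> = ACC then (PL True (a = S1), S1, MoveL) else (PL False (a = S1), a, MoveL))"
| "ctrl md j MP (PL sp b) a = (if a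
    = Bl then (MPc (if sp then MX (TP b) else MY) 0, Bl, MoveR) else (PL sp b, a, MoveL))"
| "ctrl md j MP (MPc m q) a = (case delta MP q a of (q', w, d)
    \<Rightarrow> (if q' = 1 then sim_exit m else MPc m q', w, d))"
| "ctrl md j MP (C t K0) a = (C t K1, a, MoveL)"
| "ctrl md j MP (C t K1) a = (C t K2, Bl, MoveR)"
| "ctrl md j MP (C t K2) a = (C t (K3 a), a, MoveR)"
| "ctrl md j MP (C t (K3 c)) a = (if a = c then (C t K2, a, MoveR) else (C t K4, Bl, MoveL))"
| "ctrl md j MP (C t K4) a = (C t (RS True True), Bl, MoveR)"
| "ctrl md j MP (C t (RS g f)) a = (C t (V0 g f), Bl, MoveR)"
| "ctrl md j MP (C t (V0 g f)) a
    = (if a = Bl then (C t (VL g f False True), Bl, MoveL) else (C t (V1 g f), a, MoveR))"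
| "ctrl md j MP (C t (V1 g f)) a
    = (if a = Bl then (C t (VR g f), Bl, MoveL) else (C t (V1 g f), a, MoveR))"
| "ctrl md j MP (C t (VR g f)) a = (C t (VL g f (a = S1) False), Bl, MoveL)"
| "ctrl md j MP (C t (VL g f b e)) a
    = (if a = Bl then (C t (SLs g f b e), Bl, MoveL) else (C t (VL g f b e), a, MoveL))"
| "ctrl md j MP (C t (SLs g f b e)) a
    = (if f then (C t (RS (tie_update g False b) False), Bl, MoveR) else
    (C t (UU g b e), Bl, MoveL))"
| "ctrl md j MP (C t (UU g b e)) a = (if a = Bl then
       (if e then (Wr (out_word t (tie_update g False b)) 0, Bl, Stay) else
           (C t (GoR (tie_update g False b)), Bl, MoveR))
     else if a = S1 then (C t (UM (tie_update g True b)), S0, MoveL) else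
         (C t (U0 g b e), S0, MoveL))"
| "ctrl md j MP (C t (UM g)) a = (C t (GoR g), S1, MoveR)"
| "ctrl md j MP (C t (U0 g b e)) a
    = (if a = S1 then (C t (UU g b e), S1, MoveL) else
    (C t (GoR (tie_update g False b)), S1, MoveR))"
| "ctrl md j MP (C t (GoR g)) a
    = (if a = Bl then (C t (RS g False), Bl, MoveR) else (C t (GoR g), a, MoveR))"
| "ctrl md j MP (Wr (x # xs) k) a = (Wr xs (Suc k), x, MoveR)"
| "ctrl md j MP (Wr [] k) a = (Bk (k - 1), Bl, MoveL)"
| "ctrl md j MP (Bk (Suc k)) a = (Bk k, a, MoveL)"
| "ctrl md j MP (Bk 0) a = (Halt, a, Stay)"

fun valid_aut :: "nat \<Rightarrow> aut \<Rightarrow> bool" where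
  "valid_aut j (ZA i) = (i \<le> 2 * j)"
| "valid_aut j (ZC i) = (i \<le> j)"
| "valid_aut j _ = True"

fun valid_state :: "nat \<Rightarrow> nat \<Rightarrow> st \<Rightarrow> bool" where
  "valid_state j n (PR \<sigma>) = valid_aut j \<sigma>"
| "valid_state j n (PR2 \<sigma> c) = valid_aut j \<sigma>"
| "valid_state j n (PB \<sigma>) = valid_aut j \<sigma>"
| "valid_state j n (MPc m q) = (q < n)"
| "valid_state j n (Wr xs k) = (length xs + k \<le> 6)"
| "valid_state j n (Bk k) = (k \<le> 6)"
| "valid_state j n _ = True"

lemma valid_aut_step: "valid_aut j \<sigma> \<Longrightarrow> valid_aut j (aut_step j \<sigma> b)"
  by (cases \<sigma>) auto

lemma length_out_word: "length (out_word t g) \<le> 6"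
  by (cases t) auto

lemma valid_state_ctrl:
  assumes "tm_wf MP" "valid_state j (nstates MP) z"
  shows "valid_state j (nstates MP) (fst (ctrl md j MP z a))"
proof (cases z)
  case (MPc m q)
  obtain q' w d where dd: "delta MP q a = (q', w, d)" by (metis prod.collapse)
  have "q' < nstates MP" using assms dd MPc by (auto simp: tm_wf_def) (metis fst_conv)
  then show ?thesis using MPc dd by (cases m) (auto)
next
  case (Wr xs k) then show ?thesis using assms by (cases xs) auto
next
  case (Bk k) then show ?thesis using assms by (cases k) auto
next
  case (C t c) then show ?thesis using length_out_word[of t] by (cases c) auto
next
  case Start then show ?thesis by (cases md) auto
next
  case (D x) then show ?thesis using assms by (cases x) (auto simp: tm_wf_def)
qed (use assms valid_aut_step in \<open>auto simp: tm_wf_def\<close>)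

instance sym :: countable by countable_datatype
instance tag :: countable by countable_datatype
instance mtag :: countable by countable_datatype
instance aut :: countable by countable_datatype
instance dst :: countable by countable_datatype
instance cst :: countable by countable_datatype
instance st :: countable by countable_datatype

lemma UNIV_sym: "(UNIV :: sym set) = {Bl, S0, S1}" by (auto intro: sym.exhaust)
lemma UNIV_tag: "(UNIV :: tag set) = {TP True, TP False, TD}"
proof (intro set_eqI iffI)
  fix x :: tag show "x \<in> {TP True, TP False, TD}" by (cases x) auto
qed simp

instance sym :: finite by standard (simp add: UNIV_sym)
instance tag :: finite by standard (simp add: UNIV_tag)
instance mtag :: finite
proof
  have "(UNIV :: mtag set) = insert MY (range MX)"
  proof (intro set_eqI iffI)
    fix x :: mtag show "x \<in> insert MY (range MX)" by (cases x) auto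
  qed simp
  moreover have "finite (range MX)" by simp
  ultimately show "finite (UNIV :: mtag set)" by (metis finite_insert)
qed

lemma UNIV_dst: "(UNIV :: dst set) = {DS1, DS2, DS3, DS4, DGR1, DGR2, DRD,
  BGR, BFZ, BFZ2, BMK, BCL, BCO, BW2, CSEP, CCO, CW1, CW2, CW3,
  EGR, EGR2, ERD, ECL, ECO, EW2, EW3, EW4, FCO}"
proof (intro set_eqI iffI)
  fix x :: dst show "x \<in> {DS1, DS2, DS3, DS4, DGR1, DGR2, DRD,
  BGR, BFZ, BFZ2, BMK, BCL, BCO, BW2, CSEP, CCO, CW1, CW2, CW3,
  EGR, EGR2, ERD, ECL, ECO, EW2, EW3, EW4, FCO}" by (cases x) simp_all
qed simp

instance dst :: finite by standard (simp add: UNIV_dst)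

lemma UNIV_cst: "(UNIV :: cst set) \<subseteq> {K0, K1, K2, K4} \<union> range K3 \<union> range (case_prod RS)
  \<union> range (case_prod V0) \<union> range (case_prod V1) \<union> range (case_prod VR)
  \<union> range (\<lambda>(g, f, b, e). VL g f b e) \<union> range (\<lambda>(g, f, b, e). SLs g f b e)
  \<union> range (\<lambda>(g, b, e). UU g b e) \<union> range UM \<union> range (\<lambda>(g, b, e). U0 g b e) \<union> range GoR"
proof
  fix x :: cst show "x \<in> {K0, K1, K2, K4} \<union> range K3 \<union> range (case_prod RS)
  \<union> range (case_prod V0) \<union> range (case_prod V1) \<union> range (case_prod VR)
  \<union> range (\<lambda>(g, f, b, e). VL g f b e) \<union> range (\<lambda>(g, f, b, e). SLs g f b e)
  \<union> range (\<lambda>(g, b, e). UU g b e) \<union> range UM \<union> range (\<lambda>(g, b, e). U0 g b e) \<union> range GoR"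
    by (cases x) (auto simp: image_iff)
qed

instance cst :: finite
proof
  show "finite (UNIV :: cst set)" by (rule finite_subset[OF UNIV_cst]) simp
qed

definition aut_states :: "nat \<Rightarrow> aut set" where
  "aut_states j = ZA ` {..2 * j} \<union> ZC ` {..j} \<union> {ZB, ACC, REJ}"

lemma finite_aut_states: "finite (aut_states j)" by (simp add: aut_states_def)

lemma valid_aut_in_aut_states: "valid_aut j \<sigma> \<Longrightarrow> \<sigma> \<in> aut_states j"
  by (cases \<sigma>) (auto simp: aut_states_def)

definition valid_states :: "nat \<Rightarrow> nat \<Rightarrow> st set" where "valid_states j n = {z. valid_state j n z}"

lemma finite_valid_states: "finite (valid_states j n)"
proof -
  have "valid_states j n \<subseteq> {Start, Halt} \<union> range D \<union> range (case_prod DCL) \<union> range (case_prod DCO)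
     \<union> range (case_prod DW2)
     \<union> PR ` aut_states j \<union> (case_prod PR2) ` (aut_states j \<times> UNIV) \<union> PB ` aut_states j
         \<union> range (case_prod PL)
     \<union> (case_prod MPc) ` (UNIV \<times> {..<n}) \<union> range (case_prod C)
     \<union> (case_prod Wr) ` ({xs. set xs \<subseteq> UNIV \<and> length xs \<le> 6} \<times> {..6}) \<union> Bk ` {..6}"
    (is "_ \<subseteq> ?R")
  proof
    fix z assume "z \<in> valid_states j n"
    then have v: "valid_state j n z" by (simp add: valid_states_def)
    show "z \<in> {Start, Halt} \<union> range D \<union> range (case_prod DCL) \<union> range (case_prod DCO)
     \<union> range (case_prod DW2)
     \<union> PR ` aut_states j \<union> (case_prod PR2) ` (aut_states j \<times> UNIV) \<union> PB ` aut_states j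
         \<union> range (case_prod PL)
     \<union> (case_prod MPc) ` (UNIV \<times> {..<n}) \<union> range (case_prod C)
     \<union> (case_prod Wr) ` ({xs. set xs \<subseteq> UNIV \<and> length xs \<le> 6} \<times> {..6}) \<union> Bk ` {..6}"
      using v valid_aut_in_aut_states by (cases z) (auto simp: image_iff)
  qed
  moreover have "finite {xs :: sym list. set xs \<subseteq> UNIV \<and> length xs \<le> 6}"
    by (rule finite_lists_length_le) simp
  then have "finite ?R" by (simp add: finite_aut_states)
  ultimately show ?thesis by (rule finite_subset)
qed

definition state_code :: "st \<Rightarrow> nat" where
  "state_code z = (if z = Start then 0 else if z = Halt then 1 else to_nat z + 2)"

lemma inj_state_code: "inj state_code"
  unfolding inj_def state_code_def by auto

lemma state_code_Start[simp]: "state_code Start = 0" and state_code_Halt[simp]: "state_code Halt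
    = 1"
  by (simp_all add: state_code_def)

lemma state_code_eq1[simp]: "state_code z = 1 \<longleftrightarrow> z = Halt"
  by (auto simp: state_code_def)

lemma state_code_eq1'[simp]: "state_code z = Suc 0 \<longleftrightarrow> z = Halt"
  by (auto simp: state_code_def)

lemma state_code_eq0[simp]: "state_code z = 0 \<longleftrightarrow> z = Start"
  by (auto simp: state_code_def)

lemma inv_state_code[simp]: "inv state_code (state_code z) = z"
  by (simp add: inj_state_code)

definition ctrl_tm :: "mode \<Rightarrow> nat \<Rightarrow> tm \<Rightarrow> tm" where
  "ctrl_tm md j MP = \<lparr> nstates = Suc (Max (state_code ` valid_states j (nstates MP))),
     delta = (\<lambda>e a. if e \<in> state_code ` valid_states j (nstates MP)
        then (case ctrl md j MP (inv state_code e) a of (q', w, d) \<Rightarrow> (state_code q', w, d)) else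
            (0, a, Stay)) \<rparr>"

lemma Halt_in_valid_states: "Halt \<in> valid_states j n" by (simp add: valid_states_def)

lemma ctrl_tm_wf:
  assumes "tm_wf MP" shows "tm_wf (ctrl_tm md j MP)"
proof -
  let ?V = "valid_states j (nstates MP)"
  have fin: "finite (state_code ` ?V)" using finite_valid_states by simp
  have "1 \<in> state_code ` ?V" using Halt_in_valid_states by (metis state_code_Halt imageI)
  then have "1 \<le> Max (state_code ` ?V)" using fin by (simp add: Max_ge_iff)
  moreover
  have "fst (delta (ctrl_tm md j MP) q a) < nstates (ctrl_tm md j MP)" for q a
  proof (cases "q \<in> state_code ` ?V")
    case True
    then obtain z where z: "z \<in> ?V" "q = state_code z" by auto
    obtain q' w d where dd: "ctrl md j MP z a = (q', w, d)" by (metis prod.collapse)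
    have "valid_state j (nstates MP) q'" using valid_state_ctrl[OF assms, of j z md a] z dd
        by (simp add: valid_states_def)
    then have "state_code q' \<in> state_code ` ?V" by (simp add: valid_states_def)
    then have "state_code q' \<le> Max (state_code ` ?V)" using fin by simp
    then show ?thesis using True z dd by (simp add: ctrl_tm_def)
  next
    case False then show ?thesis by (simp add: ctrl_tm_def)
  qed
  ultimately show ?thesis unfolding tm_wf_def by (simp add: ctrl_tm_def)
qed

lemma valid_state_gstep:
  assumes "tm_wf MP" "valid_state j (nstates MP) z"
  shows "valid_state j (nstates MP) (fst (gstep (ctrl md j MP) Halt (z, l, r)))"
proof -
  obtain q' w d where dd: "ctrl md j MP z (head_sym r) = (q', w, d)" by (metis prod.collapse)
  have "valid_state j (nstates MP) q'" using valid_state_ctrl[OF assms, of md "head_sym r"] dd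
      by simp
  then show ?thesis using assms dd by (cases d) (auto simp: gstep_def)
qed

definition conf_code :: "st gconf \<Rightarrow> config" where "conf_code c = (state_code (fst c), snd c)"

lemma ctrl_tm_step:
  assumes "tm_wf MP" "valid_state j (nstates MP) z"
  shows "tm_step (ctrl_tm md j MP) (state_code z, l, r)
      = conf_code (gstep (ctrl md j MP) Halt (z, l, r))"
proof (cases "z = Halt")
  case True then show ?thesis by (simp add: tm_step_def conf_code_def)
next
  case False
  obtain q' w d where dd: "ctrl md j MP z (head_sym r) = (q', w, d)" by (metis prod.collapse)
  have "state_code z \<in> state_code ` valid_states j (nstates MP)" using assms
      by (simp add: valid_states_def)
  then have "delta (ctrl_tm md j MP) (state_code z) (head_sym r) = (state_code q', w, d)"
    using dd by (simp add: ctrl_tm_def)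
  then show ?thesis using False dd by (cases d) (simp_all add: tm_step_alt gstep_def conf_code_def)
qed

lemma ctrl_tm_run:
  assumes "tm_wf MP" "valid_state j (nstates MP) (fst c)"
  shows "tm_run (ctrl_tm md j MP) t (conf_code c) = conf_code (grun (ctrl md j MP) Halt t c) \<and>
         valid_state j (nstates MP) (fst (grun (ctrl md j MP) Halt t c))"
proof (induct t)
  case 0 then show ?case using assms by (simp add: tm_run_def)
next
  case (Suc t)
  obtain z l r where g: "grun (ctrl md j MP) Halt t c = (z, l, r)" by (metis prod.collapse)
  have v: "valid_state j (nstates MP) z" using Suc g by simp
  have "tm_run (ctrl_tm md j MP) (Suc t) (conf_code c)
      = tm_step (ctrl_tm md j MP) (conf_code (z, l, r))"
    using Suc g by (simp add: tm_run_def)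
  also have "\<dots> = conf_code (gstep (ctrl md j MP) Halt (z, l, r))"
    using ctrl_tm_step[OF assms(1) v] by (simp add: conf_code_def)
  finally show ?case using valid_state_gstep[OF assms(1) v, of md l r] g by (simp add: grun_Suc')
qed

lemma init_conf_code: "init_conf x = conf_code (Start, [], enc x)"
  by (simp add: init_conf_def conf_code_def)

section \<open>Runs of the controller\<close>

definition nonblank :: "sym list \<Rightarrow> bool" where "nonblank xs \<longleftrightarrow> (\<forall>a\<in>set xs. a \<noteq> Bl)"
definition all_blank :: "sym list \<Rightarrow> bool" where "all_blank xs \<longleftrightarrow> (\<forall>a\<in>set xs. a = Bl)"

lemma nonblank_simps[simp]: "nonblank []" "nonblank (a # xs) \<longleftrightarrow> a \<noteq> Bl
    \<and> nonblank xs" "nonblank (xs @ ys) \<longleftrightarrow> nonblank xs \<and> nonblank ys"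
  "nonblank (rev xs) = nonblank xs" "nonblank (replicate n a) \<longleftrightarrow> n = 0 \<or> a \<noteq> Bl"
  by (auto simp: nonblank_def)

lemma all_blank_simps[simp]: "all_blank []" "all_blank (a # xs) \<longleftrightarrow> a = Bl \<and> all_blank xs"
  "all_blank (xs @ ys) \<longleftrightarrow> all_blank xs \<and> all_blank ys" "all_blank (replicate n a) \<longleftrightarrow> n = 0 \<or> a = Bl"
  by (auto simp: all_blank_def)

lemma all_blank_tl: "all_blank E \<Longrightarrow> all_blank (tl E)"
  by (cases E) auto

lemma nonblank_enc[simp]: "nonblank (enc x)" by (auto simp: nonblank_def enc_def)
lemma enc_simps[simp]: "enc [] = []" "enc (b # x) = (if b then S1 else S0) # enc x"
  "enc (x @ y) = enc x @ enc y" "length (enc x) = length x"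
  "enc (replicate n b) = replicate n (if b then S1 else S0)"
  by (simp_all add: enc_def)

definition bsym :: "bool \<Rightarrow> sym" where "bsym b = (if b then S1 else S0)"
lemma bsym_simps[simp]: "bsym b \<noteq> Bl" "bsym True = S1" "bsym False = S0"
  "bsym b = S1 \<longleftrightarrow> b" "bsym b = S0 \<longleftrightarrow> \<not> b"
  by (auto simp: bsym_def)

lemma all_blank_head: "all_blank E \<Longrightarrow> head_sym E = Bl"
  by (cases E) auto

definition marks :: "nat \<Rightarrow> sym list" where "marks p = concat (replicate p [S1, S0])"

lemma marks_simps[simp]: "marks 0 = []" "marks (Suc p) = S1 # S0 # marks p" "length (marks p)
    = 2 * p" "nonblank (marks p)"
  by (induct p) (auto simp: marks_def nonblank_def)

lemma marks_Suc': "marks (Suc p) = marks p @ [S1, S0]"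
  by (induct p) auto

definition less_tie :: "bool \<Rightarrow> nat \<Rightarrow> nat \<Rightarrow> bool" where
  "less_tie g A B \<longleftrightarrow> A < B \<or> (A = B \<and> g)"

lemma less_tie_step: "less_tie g (2 * A + (if x then 1 else 0)) (2 * B + (if y then 1 else 0))
    = less_tie (tie_update g x y) A B"
  by (auto simp: less_tie_def tie_update_def)

lemma bits_val_snoc: "bits_val (xs @ [b]) = 2 * bits_val xs + (if b then 1 else 0)"
  by (simp add: bits_val_def)

lemma bits_val_Nil[simp]: "bits_val [] = 0" by (simp add: bits_val_def)

lemma enc_double_bits_snoc: "enc (double_bits (u @ [a])) = enc (double_bits u) @ [bsym a, bsym a]"
  by (simp add: bsym_def)

lemma enc_snoc: "enc (v @ [c]) = enc v @ [bsym c]"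
  by (simp add: bsym_def)

lemma foldl_REJ[simp]: "foldl (aut_step j) REJ xs = REJ" by (induct xs) auto
lemma foldl_ACC[simp]: "foldl (aut_step j) ACC xs = ACC" by (induct xs) auto

lemma aut_ZC: "i \<le> j \<Longrightarrow> foldl (aut_step j) (ZC i) xs = ACC
    \<longleftrightarrow> (\<exists>w. xs = replicate (j - i) False @ True # w)"
proof (induct xs arbitrary: i)
  case Nil then show ?case by simp
next
  case (Cons b xs)
  show ?case
  proof (cases b)
    case True
    then show ?thesis using Cons.prems by (cases "j - i") auto
  next
    case False
    show ?thesis
    proof (cases "i < j")
      case True
      have "foldl (aut_step j) (ZC i) (b # xs) = foldl (aut_step j) (ZC (Suc i)) xs"
          using False True by simp
      moreover have "(\<exists>w. xs = replicate (j - Suc i) False @ True # w)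
          \<longleftrightarrow> (\<exists>w. b # xs = replicate (j - i) False @ True # w)"
        using False True by (simp add: Suc_diff_Suc[symmetric])
      ultimately show ?thesis using Cons.hyps[of "Suc i"] True by simp
    next
      case ii: False
      then have "i = j" using Cons.prems by simp
      then show ?thesis using False by simp
    qed
  qed
qed

lemma aut_ZB: "foldl (aut_step j) ZB xs = ACC \<longleftrightarrow> (\<exists>w. xs = True # replicate j False @ True # w)"
proof (cases xs)
  case Nil then show ?thesis by simp
next
  case (Cons b xs')
  then show ?thesis using aut_ZC[of 0 j xs'] by (cases b) auto
qed

lemma aut_ZA: "i \<le> 2 * j \<Longrightarrow> foldl (aut_step j) (ZA i) xs = ACC \<longleftrightarrow>
   (\<exists>w. xs = replicate (2 * j - i) False @ False # True # replicate j False @ True # w)"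
proof (induct xs arbitrary: i)
  case Nil then show ?case by simp
next
  case (Cons b xs)
  show ?case
  proof (cases b)
    case True
    then show ?thesis by (cases "2 * j - i") auto
  next
    case False
    show ?thesis
    proof (cases "i < 2 * j")
      case True
      have "foldl (aut_step j) (ZA i) (b # xs) = foldl (aut_step j) (ZA (Suc i)) xs"
          using False True by simp
      moreover have "(\<exists>w. xs = replicate (2 * j - Suc i) False @ False # True # replicate j False
          @ True # w) \<longleftrightarrow>
          (\<exists>w. b # xs = replicate (2 * j - i) False @ False # True # replicate j False @ True # w)"
        using False True by (simp add: Suc_diff_Suc[symmetric])
      ultimately show ?thesis using Cons.hyps[of "Suc i"] True by simp
    next
      case ii: False
      then have "i = 2 * j" using Cons.prems by simp
      then show ?thesis using False aut_ZB[of j xs] by simp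
    qed
  qed
qed

definition special :: "nat \<Rightarrow> bool list \<Rightarrow> bool" where
  "special j x \<longleftrightarrow> (\<exists>w. x = pair (replicate j False) (replicate j False @ True # w))"

lemma aut_special: "foldl (aut_step j) (ZA 0) x = ACC \<longleftrightarrow> special j x"
  unfolding special_def pair_eq_double_bits using aut_ZA[of 0 j x] by simp

lemma head_sym_Cons_tl: "r \<noteq> [] \<Longrightarrow> head_sym r # tl r = r"
  by (cases r) auto

context fixes md :: mode and j :: nat and MP :: tm
begin

definition reaches :: "st gconf \<Rightarrow> nat \<Rightarrow> st gconf \<Rightarrow> bool" where
  "reaches c B c' \<longleftrightarrow> reach (ctrl md j MP) Halt c c' B"

lemma reaches_trans[trans]: "reaches c B1 c1 \<Longrightarrow> reaches c1 B2 c2 \<Longrightarrow> reaches c (B1 + B2) c2"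
  unfolding reaches_def by (rule reach_trans)

lemma reaches_mono: "reaches c B c' \<Longrightarrow> B \<le> B' \<Longrightarrow> reaches c B' c'"
  unfolding reaches_def by (rule reach_mono)

lemma reaches_refl: "reaches c 0 c" unfolding reaches_def by (rule reach_refl)

lemma reaches_step: "q \<noteq> Halt \<Longrightarrow> ctrl md j MP q (head_sym r) = (q', w, d)
    \<Longrightarrow> reaches (q, l, r) 1 (mvstep q' w d l r)"
  unfolding reaches_def by (rule reach_step) (simp add: gstep_def)

lemma scanR_nonblank:
  assumes "q \<noteq> Halt" "\<And>a. a \<noteq> Bl \<Longrightarrow> ctrl md j MP q a = (q, a, MoveR)" "nonblank xs"
  shows "reaches (q, l, xs @ r) (length xs) (q, rev xs @ l, r)"
  unfolding reaches_def using assms by (intro reach_run scanR) (auto simp: nonblank_def)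

lemma scanL_nonblank:
  assumes "q \<noteq> Halt" "\<And>a. a \<noteq> Bl \<Longrightarrow> ctrl md j MP q a = (q, a, MoveL)" "nonblank (x # xs)"
  shows "reaches (q, rev xs @ l, x # r) (Suc (length xs)) (q, tl l, head_sym l # xs @ x # r)"
proof -
  have "\<forall>a\<in>set (x # xs). ctrl md j MP q a = (q, a, MoveL)" using assms(2,3)
      by (auto simp: nonblank_def)
  then show ?thesis unfolding reaches_def by (intro reach_run scanL[OF assms(1)])
qed

lemma scanL_to_left_end:
  assumes "q \<noteq> Halt" "\<And>a. a \<noteq> Bl \<Longrightarrow> ctrl md j MP q a = (q, a, MoveL)" "nonblank Ot" "Ot \<noteq> []"
  shows "reaches (q, tl (rev Ot), head_sym (rev Ot) # R) (length Ot) (q, [], Bl # Ot @ R)"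
proof -
  obtain Ot0 oo where Ot: "Ot = Ot0 @ [oo]" using assms(4) by (metis rev_exhaust)
  have "reaches (q, rev Ot0 @ [], oo # R) (Suc (length Ot0)) (q, tl [], head_sym [] # Ot0 @ oo # R)"
    using assms Ot by (intro scanL_nonblank) auto
  then show ?thesis using Ot by simp
qed

lemma scanR_past_blank:
  assumes "q \<noteq> Halt" "\<And>a. a \<noteq> Bl \<Longrightarrow> ctrl md j MP q a = (q, a, MoveR)" "nonblank Ot"
    "ctrl md j MP q Bl = (q2, Bl, MoveR)"
  shows "reaches (q, [], Ot @ Bl # Z) (Suc (length Ot)) (q2, Bl # rev Ot, Z)"
proof -
  have "reaches (q, [], Ot @ Bl # Z) (length Ot) (q, rev Ot @ [], Bl # Z)"
    using assms by (intro scanR_nonblank) auto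
  also have "reaches (q, rev Ot @ [], Bl # Z) 1 (q2, Bl # rev Ot, Z)"
    using reaches_step[of q "Bl # Z" q2 Bl MoveR "rev Ot @ []"] assms by simp
  finally show ?thesis by simp
qed

lemma Wr_run: "grun (ctrl md j MP) Halt (length xs) (Wr xs k, l, r)
    = (Wr [] (k + length xs), rev xs @ l, drop (length xs) r)"
proof (induct xs arbitrary: k l r)
  case Nil then show ?case by simp
next
  case (Cons x xs)
  have "gstep (ctrl md j MP) Halt (Wr (x # xs) k, l, r) = (Wr xs (Suc k), x # l, tl r)"
    by (simp add: gstep_def)
  then show ?case using Cons[of "Suc k" "x # l" "tl r"] by (simp add: grun_Suc drop_Suc)
qed

lemma Bk_run: "length ys = k \<Longrightarrow> r \<noteq> [] \<Longrightarrow> grun (ctrl md j MP) Halt k (Bk k, rev ys @ l, r)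
    = (Bk 0, l, ys @ r)"
proof (induct ys arbitrary: k r rule: rev_induct)
  case Nil then show ?case by simp
next
  case (snoc y ys)
  then obtain k' where k: "k = Suc k'" by (cases k) auto
  obtain a r' where r: "r = a # r'" using snoc by (cases r) auto
  have "gstep (ctrl md j MP) Halt (Bk k, rev (ys @ [y]) @ l, r) = (Bk k', rev ys @ l, y # r)"
    using k r by (simp add: gstep_def)
  then show ?case using snoc k by (simp add: grun_Suc)
qed

lemma Wr_full:
  assumes "xs \<noteq> []"
  shows "reaches (Wr xs 0, l, r) (2 * length xs + 1) (Halt, l, xs @ Bl # tl (drop (length xs) r))"
proof -
  obtain ys y where xs: "xs = ys @ [y]" using assms by (metis rev_exhaust)
  have "reaches (Wr xs 0, l, r) (length xs) (Wr [] (length xs), rev xs @ l, drop (length xs) r)"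
    unfolding reaches_def by (rule reach_run) (simp add: Wr_run)
  also have "reaches (Wr [] (length xs), rev xs @ l, drop (length xs) r) 1
      (Bk (length ys), rev ys @ l, y # Bl # tl (drop (length xs) r))"
    using reaches_step[of "Wr [] (length xs)" "drop (length xs) r" "Bk (length ys)" Bl MoveL
        "rev xs @ l"] xs by simp
  also have "reaches (Bk (length ys), rev ys @ l, y # Bl # tl (drop (length xs) r)) (length ys)
      (Bk 0, l, ys @ y # Bl # tl (drop (length xs) r))"
    unfolding reaches_def by (rule reach_run) (simp add: Bk_run)
  also have "reaches (Bk 0, l, ys @ y # Bl # tl (drop (length xs) r)) 1
       (Halt, l, ys @ y # Bl # tl (drop (length xs) r))"
    using reaches_step[of "Bk 0" "ys @ y # Bl # tl (drop (length xs) r)" Halt _ Stay l]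
    by (cases ys) simp_all
  finally show ?thesis using xs by (simp add: mult_2)
qed

lemma reaches_stepI: "c' = mvstep q' w d l r \<Longrightarrow> q \<noteq> Halt \<Longrightarrow> ctrl md j MP q (head_sym r) = (q', w, d)
    \<Longrightarrow> reaches (q, l, r) 1 c'"
  using reaches_step by simp

lemma reaches_exI: "reaches c B c1 \<Longrightarrow> c1 = (q, l, a # b # r) \<Longrightarrow> B \<le> B'
    \<Longrightarrow> \<exists>r'. reaches c B' (q, l, a # b # r')"
  using reaches_mono by blast

lemma replicate_app_Cons_Suc: "replicate n x @ x # X = replicate (Suc n) x @ X"
  by (simp add: replicate_app_Cons_same)

lemma replicate_add_4: "replicate (4 + n) x = x # x # x # x # replicate n x"
  by (simp add: numeral_eq_Suc)

lemma reaches_conv: "reaches c B c' \<Longrightarrow> c = c0 \<Longrightarrow> c' = c0' \<Longrightarrow> B \<le> B0 \<Longrightarrow> reaches c0 B0 c0'"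
  using reaches_mono by blast

lemma scanL_past_blank:
  assumes "q \<noteq> Halt" "\<And>a. a \<noteq> Bl \<Longrightarrow> ctrl md j MP q a = (q, a, MoveL)" "nonblank Y"
  shows "reaches (q, tl (rev Y @ Bl # L), head_sym (rev Y @ Bl # L) # R) (length Y)
      (q, L, Bl # Y @ R)"
proof (cases Y rule: rev_cases)
  case Nil then show ?thesis by (simp add: reaches_refl)
next
  case (snoc Y1 y)
  have "reaches (q, rev Y1 @ Bl # L, y # R) (Suc (length Y1))
      (q, tl (Bl # L), head_sym (Bl # L) # Y1 @ y # R)"
    using assms snoc by (intro scanL_nonblank) auto
  then show ?thesis using snoc by simp
qed

lemma DCL_run:
  assumes "nonblank (x # xs)"
  shows "grun (ctrl md j MP) Halt (Suc (length xs)) (DCL c f, rev xs @ l, x # r)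
     = (DCL c (f \<or> S1 \<in> set (x # xs)), tl l, head_sym l # xs @ x # r)"
  using assms
proof (induct xs arbitrary: x r f rule: rev_induct)
  case Nil
  then show ?case by (auto simp: gstep_def grun_Suc)
next
  case (snoc z xs)
  have "gstep (ctrl md j MP) Halt (DCL c f, rev (xs @ [z]) @ l, x # r)
      = (DCL c (f \<or> x = S1), rev xs @ l, z # x # r)"
    using snoc.prems by (simp add: gstep_def)
  moreover have "grun (ctrl md j MP) Halt (Suc (length xs))
      (DCL c (f \<or> x = S1), rev xs @ l, z # x # r)
     = (DCL c ((f \<or> x = S1) \<or> S1 \<in> set (z # xs)), tl l, head_sym l # xs @ z # x # r)"
    using snoc by auto
  ultimately show ?case by (auto simp: grun_Suc)
qed

lemma DCL_cross:
  assumes "nonblank Y"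
  shows "reaches (DCL c False, tl (rev Y @ Bl # L), head_sym (rev Y @ Bl # L) # R) (length Y)
     (DCL c (S1 \<in> set Y), L, Bl # Y @ R)"
proof (cases Y rule: rev_cases)
  case Nil then show ?thesis by (simp add: reaches_refl)
next
  case (snoc Y1 y)
  have "grun (ctrl md j MP) Halt (Suc (length Y1)) (DCL c False, rev Y1 @ Bl # L, y # R)
     = (DCL c (False \<or> S1 \<in> set (y # Y1)), tl (Bl # L), head_sym (Bl # L) # Y1 @ y # R)"
    using assms snoc by (intro DCL_run) auto
  then show ?thesis using snoc unfolding reaches_def by (intro reach_run) auto
qed

lemma halfA:
  assumes "nonblank Ot" "nonblank Y0" "all_blank E" "c \<noteq> Bl"
  shows "reaches (D DGR1, [], Ot @ Bl # (Y0 @ [c]) @ E) (2 * length Y0 + length Ot + 4)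
            (DCL c (S1 \<in> set Y0), rev Ot, Bl # Y0 @ Bl # Bl # tl E)"
proof -
  have "reaches (D DGR1, [], Ot @ Bl # (Y0 @ [c]) @ E) (Suc (length Ot))
      (D DGR2, Bl # rev Ot, (Y0 @ [c]) @ E)"
    using assms by (intro scanR_past_blank) auto
  also have "reaches \<dots> (length (Y0 @ [c])) (D DGR2, rev (Y0 @ [c]) @ Bl # rev Ot, E)"
    using assms by (intro scanR_nonblank) auto
  also have "reaches \<dots> 1 (D DRD, rev Y0 @ Bl # rev Ot, c # Bl # tl E)"
    by (insert assms) (rule reaches_stepI; simp add: all_blank_head)
  also have "reaches \<dots> 1 (DCL c False, tl (rev Y0 @ Bl # rev Ot),
      head_sym (rev Y0 @ Bl # rev Ot) # Bl # Bl # tl E)"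
    by (insert assms) (rule reaches_stepI; simp)
  also have "reaches \<dots> (length Y0) (DCL c (S1 \<in> set Y0), rev Ot, Bl # Y0 @ Bl # Bl # tl E)"
    using assms by (intro DCL_cross)
  finally show ?thesis by (rule reaches_mono) simp
qed

lemma roundA:
  assumes "nonblank Ot" "Ot \<noteq> []" "nonblank Y0" "all_blank E" "c \<noteq> Bl" "\<not> (c = S0 \<and> S1 \<notin> set Y0)"
  shows "reaches (D DGR1, [], Ot @ Bl # (Y0 @ [c]) @ E) (2 * length Ot + 2 * length Y0 + 8)
            ((if S1 \<in> set Y0 then D DGR1 else D BGR), [], c # c # Ot @ Bl # Y0 @ Bl # Bl # tl E)"
proof -
  let ?f = "S1 \<in> set Y0"
  have "reaches (D DGR1, [], Ot @ Bl # (Y0 @ [c]) @ E) (2 * length Y0 + length Ot + 4)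
            (DCL c ?f, rev Ot, Bl # Y0 @ Bl # Bl # tl E)"
    using assms by (intro halfA)
  also have "reaches \<dots> 1 (DCO c (\<not> ?f), tl (rev Ot), head_sym (rev Ot) # Bl # Y0 @ Bl # Bl # tl E)"
    by (insert assms) (rule reaches_stepI; auto)
  also have "reaches \<dots> (length Ot) (DCO c (\<not> ?f), [], Bl # Ot @ Bl # Y0 @ Bl # Bl # tl E)"
    using assms by (intro scanL_to_left_end) auto
  also have "reaches \<dots> 1 (DW2 c (\<not> ?f), [], Bl # c # Ot @ Bl # Y0 @ Bl # Bl # tl E)"
    by (insert assms) (rule reaches_stepI; auto)
  also have "reaches \<dots> 1 ((if ?f then D DGR1 else D BGR), [],
      c # c # Ot @ Bl # Y0 @ Bl # Bl # tl E)"
    by (insert assms) (rule reaches_stepI; auto)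
  finally show ?thesis by (rule reaches_mono) simp
qed

lemma rejA:
  assumes "nonblank Ot" "nonblank Y0" "all_blank E" "S1 \<notin> set Y0"
  shows "\<exists>r'. reaches (D DGR1, [], Ot @ Bl # (Y0 @ [S0]) @ E) (2 * length Y0 + length Ot + 8)
            (Halt, rev Ot, S0 # Bl # r')"
proof -
  have "reaches (D DGR1, [], Ot @ Bl # (Y0 @ [S0]) @ E) (2 * length Y0 + length Ot + 4)
            (DCL S0 False, rev Ot, Bl # Y0 @ Bl # Bl # tl E)"
    using assms halfA[of Ot Y0 E S0] by simp
  also have "reaches \<dots> 1 (Wr [S0] 0, rev Ot, Bl # Y0 @ Bl # Bl # tl E)"
    by (insert assms) (rule reaches_stepI; auto)
  also have "reaches \<dots> 3 (Halt, rev Ot, S0 # Bl # tl (Y0 @ Bl # Bl # tl E))"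
    using Wr_full[where xs="[S0]" and l="rev Ot" and r="Bl # Y0 @ Bl # Bl # tl E"] by simp
  finally show ?thesis by (rule reaches_exI) (rule refl, simp)
qed

lemma rejE:
  assumes "nonblank Ot" "all_blank E"
  shows "\<exists>r'. reaches (D DGR1, [], Ot @ Bl # E) (length Ot + 6) (Halt, rev Ot, S0 # Bl # r')"
proof -
  have "reaches (D DGR1, [], Ot @ Bl # E) (Suc (length Ot)) (D DGR2, Bl # rev Ot, E)"
    using assms by (intro scanR_past_blank) auto
  also have "reaches \<dots> 1 (D DRD, rev Ot, Bl # Bl # tl E)"
    by (insert assms) (rule reaches_stepI; simp add: all_blank_head)
  also have "reaches \<dots> 1 (Wr [S0] 0, rev Ot, Bl # Bl # tl E)"
    by (rule reaches_stepI; simp)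
  also have "reaches \<dots> 3 (Halt, rev Ot, S0 # Bl # tl (Bl # tl E))"
    using Wr_full[where xs="[S0]" and l="rev Ot" and r="Bl # Bl # tl E"] by simp
  finally show ?thesis by (rule reaches_exI) (rule refl, simp)
qed

lemma scanR_all:
  assumes "q \<noteq> Halt" "\<forall>a\<in>set xs. ctrl md j MP q a = (q, a, MoveR)"
  shows "reaches (q, l, xs @ r) (length xs) (q, rev xs @ l, r)"
  unfolding reaches_def using assms by (intro reach_run scanR)

lemma enc_snoc_after_one: "enc (replicate k False @ True # w @ [b])
    = enc (replicate k False @ True # w) @ [bsym b]"
  by (simp add: bsym_def)

lemma loopA:
  "\<forall>Ot E. nonblank Ot \<longrightarrow> Ot \<noteq> [] \<longrightarrow> all_blank E \<longrightarrow> length Ot + 3 * length w + k + 1 \<le> N \<longrightarrow>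
   (\<exists>E'. all_blank E' \<and> reaches (D DGR1, [], Ot @ Bl # enc (replicate k False @ True # w) @ E)
       (length w * (4 * N + 8))
        (D DGR1, [], enc (double_bits w) @ Ot @ Bl # enc (replicate k False @ [True]) @ E'))"
proof (induct w rule: rev_induct)
  case Nil then show ?case by (auto intro: reaches_refl)
next
  case (snoc b w)
  show ?case
  proof (intro allI impI)
    fix Ot E assume a: "nonblank Ot" "Ot \<noteq> []" "all_blank E" "length Ot + 3 * length (w @ [b]) + k
        + 1 \<le> N"
    let ?Y0 = "enc (replicate k False @ True # w)"
    have s1: "S1 \<in> set ?Y0" by simp
    have "reaches (D DGR1, [], Ot @ Bl # (?Y0 @ [bsym b]) @ E) (2 * length Ot + 2 * length ?Y0 + 8)
            ((if S1 \<in> set ?Y0 then D DGR1 else D BGR), [],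
                bsym b # bsym b # Ot @ Bl # ?Y0 @ Bl # Bl # tl E)"
      using a by (intro roundA) auto
    then have r1: "reaches (D DGR1, [], Ot @ Bl # enc (replicate k False @ True # w @ [b]) @ E)
        (4 * N + 8)
            (D DGR1, [], (bsym b # bsym b # Ot) @ Bl # ?Y0 @ Bl # Bl # tl E)"
      using a s1 by (subst enc_snoc_after_one) (auto elim!: reaches_mono)
    have "\<exists>E'. all_blank E'
        \<and> reaches (D DGR1, [], (bsym b # bsym b # Ot) @ Bl # ?Y0 @ (Bl # Bl # tl E))
        (length w * (4 * N + 8))
        (D DGR1, [], enc (double_bits w) @ (bsym b # bsym b # Ot) @ Bl # enc
            (replicate k False @ [True]) @ E')"
      by (rule snoc[rule_format]) (use a all_blank_tl[of E] in auto)
    then obtain E' where e: "all_blank E'" "reaches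
        (D DGR1, [], (bsym b # bsym b # Ot) @ Bl # ?Y0 @ (Bl # Bl # tl E)) (length w * (4 * N + 8))
        (D DGR1, [], enc (double_bits w) @ (bsym b # bsym b # Ot) @ Bl # enc
            (replicate k False @ [True]) @ E')" by blast
    have "reaches (D DGR1, [], Ot @ Bl # enc (replicate k False @ True # w @ [b]) @ E)
        (4 * N + 8 + length w * (4 * N + 8))
        (D DGR1, [], enc (double_bits w) @ (bsym b # bsym b # Ot) @ Bl # enc
            (replicate k False @ [True]) @ E')"
      using reaches_trans[OF r1] e by simp
    moreover have "enc (double_bits (w @ [b])) @ Ot
        = enc (double_bits w) @ (bsym b # bsym b # Ot)" by (simp add: bsym_def)
    ultimately show "\<exists>E'. all_blank E'
        \<and> reaches (D DGR1, [], Ot @ Bl # enc (replicate k False @ True # w @ [b]) @ E)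
        (length (w @ [b]) * (4 * N + 8))
        (D DGR1, [], enc (double_bits (w @ [b])) @ Ot @ Bl # enc (replicate k False @ [True]) @ E')"
      using e(1) by (auto simp: algebra_simps)
  qed
qed

lemma head_sym_Cons_tl_replicate: "all_blank E \<Longrightarrow> head_sym (replicate b S1 @ E) # tl (replicate b S1 @ E)
   = replicate b S1 @ (if b = 0 then Bl # tl E else E)"
  by (cases b) (auto simp: all_blank_head)

lemma roundB:
  assumes "nonblank Ot" "Ot \<noteq> []" "all_blank E"
  shows "\<exists>E1. all_blank E1
      \<and> reaches (D BGR, [], Ot @ Bl # replicate (Suc a) S0 @ replicate b S1 @ E)
      (2 * length Ot + 2 * a + 8) (D BGR, [],
          S0 # S0 # Ot @ Bl # replicate a S0 @ replicate (Suc b) S1 @ E1)"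
proof -
  let ?X = "replicate b S1 @ E"
  let ?E1 = "if b = 0 then Bl # tl E else E"
  have hX: "head_sym ?X \<noteq> S0" using assms(3) by (cases b) (auto simp: all_blank_head)
  have X': "head_sym ?X # tl ?X = replicate b S1 @ ?E1" using head_sym_Cons_tl_replicate[OF assms(3)] .
  have "reaches (D BGR, [], Ot @ Bl # S0 # replicate a S0 @ ?X) (Suc (length Ot))
      (D BFZ, Bl # rev Ot, S0 # replicate a S0 @ ?X)"
    using assms by (intro scanR_past_blank) auto
  also have "reaches \<dots> 1 (D BFZ2, S0 # Bl # rev Ot, replicate a S0 @ ?X)"
    by (rule reaches_stepI; simp)
  also have "reaches \<dots> (length (replicate a S0))
      (D BFZ2, rev (replicate a S0) @ S0 # Bl # rev Ot, ?X)"
    by (intro scanR_all) auto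
  also have "reaches \<dots> 1 (D BMK, replicate a S0 @ Bl # rev Ot, S0 # head_sym ?X # tl ?X)"
    using hX by (intro reaches_stepI) (simp_all add: replicate_app_Cons_same)
  also have "reaches \<dots> 1 (D BCL, tl (rev (replicate a S0) @ Bl # rev Ot),
      head_sym (rev (replicate a S0) @ Bl # rev Ot) # S1 # head_sym ?X # tl ?X)"
    by (rule reaches_stepI; simp)
  also have "reaches \<dots> (length (replicate a S0))
      (D BCL, rev Ot, Bl # replicate a S0 @ S1 # head_sym ?X # tl ?X)"
    by (intro scanL_past_blank) auto
  also have "reaches \<dots> 1 (D BCO, tl (rev Ot),
      head_sym (rev Ot) # Bl # replicate a S0 @ S1 # head_sym ?X # tl ?X)"
    by (rule reaches_stepI; simp)
  also have "reaches \<dots> (length Ot)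
      (D BCO, [], Bl # Ot @ Bl # replicate a S0 @ S1 # head_sym ?X # tl ?X)"
    using assms by (intro scanL_to_left_end) auto
  also have "reaches \<dots> 1 (D BW2, [], Bl # S0 # Ot @ Bl # replicate a S0 @ S1 # head_sym ?X # tl ?X)"
    by (rule reaches_stepI; simp)
  also have "reaches \<dots> 1 (D BGR, [], S0 # S0 # Ot @ Bl # replicate a S0 @ S1 # head_sym ?X # tl ?X)"
    by (rule reaches_stepI; simp)
  finally have "reaches (D BGR, [], Ot @ Bl # replicate (Suc a) S0 @ replicate b S1 @ E)
      (2 * length Ot + 2 * a + 8) (D BGR, [],
          S0 # S0 # Ot @ Bl # replicate a S0 @ replicate (Suc b) S1 @ ?E1)"
    unfolding X' by (rule reaches_conv) simp_all
  moreover have "all_blank ?E1" using assms(3) all_blank_tl by auto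
  ultimately show ?thesis by blast
qed

lemma loopB:
  "\<forall>Ot b E. nonblank Ot \<longrightarrow> Ot \<noteq> [] \<longrightarrow> all_blank E \<longrightarrow> length Ot + 3 * a + b \<le> N \<longrightarrow>
   (\<exists>E'. all_blank E' \<and> reaches (D BGR, [], Ot @ Bl # replicate a S0 @ replicate b S1 @ E)
       (a * (2 * N + 8))
        (D BGR, [], replicate (2 * a) S0 @ Ot @ Bl # replicate (a + b) S1 @ E'))"
proof (induct a)
  case 0 then show ?case by (auto intro: reaches_refl)
next
  case (Suc a)
  show ?case
  proof (intro allI impI)
    fix Ot b E assume a: "nonblank Ot" "Ot \<noteq> []" "all_blank E" "length Ot + 3 * Suc a + b \<le> N"
    obtain E1 where e1: "all_blank E1" "reaches
        (D BGR, [], Ot @ Bl # replicate (Suc a) S0 @ replicate b S1 @ E)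
      (2 * length Ot + 2 * a + 8) (D BGR, [],
          (S0 # S0 # Ot) @ Bl # replicate a S0 @ replicate (Suc b) S1 @ E1)"
      using roundB[OF a(1-3)] by auto
    have "\<exists>E'. all_blank E'
        \<and> reaches (D BGR, [], (S0 # S0 # Ot) @ Bl # replicate a S0 @ replicate (Suc b) S1 @ E1)
        (a * (2 * N + 8))
        (D BGR, [], replicate (2 * a) S0 @ (S0 # S0 # Ot) @ Bl # replicate (a + Suc b) S1 @ E')"
      by (rule Suc[rule_format]) (use a e1 in auto)
    then obtain E' where e: "all_blank E'" "reaches
        (D BGR, [], (S0 # S0 # Ot) @ Bl # replicate a S0 @ replicate (Suc b) S1 @ E1)
        (a * (2 * N + 8))
        (D BGR, [], replicate (2 * a) S0 @ (S0 # S0 # Ot) @ Bl # replicate (a + Suc b) S1 @ E')"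
            by blast
    have "reaches (D BGR, [], Ot @ Bl # replicate (Suc a) S0 @ replicate b S1 @ E)
        (2 * length Ot + 2 * a + 8 + a * (2 * N + 8))
        (D BGR, [], replicate (2 * a) S0 @ (S0 # S0 # Ot) @ Bl # replicate (a + Suc b) S1 @ E')"
      using reaches_trans[OF e1(2) e(2)] .
    moreover have "2 * length Ot + 2 * a + 8 + a * (2 * N + 8) \<le> Suc a * (2 * N + 8)" using a(4)
        by simp
    ultimately have "reaches (D BGR, [], Ot @ Bl # replicate (Suc a) S0 @ replicate b S1 @ E)
        (Suc a * (2 * N + 8))
        (D BGR, [], replicate (2 * Suc a) S0 @ Ot @ Bl # replicate (Suc a + b) S1 @ E')"
      by (elim reaches_conv) (simp_all add: replicate_app_Cons_Suc)
    then show "\<exists>E'. all_blank E'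
        \<and> reaches (D BGR, [], Ot @ Bl # replicate (Suc a) S0 @ replicate b S1 @ E)
        (Suc a * (2 * N + 8))
        (D BGR, [], replicate (2 * Suc a) S0 @ Ot @ Bl # replicate (Suc a + b) S1 @ E')"
      using e(1) by blast
  qed
qed

lemma exitB:
  assumes "nonblank Ot" "Ot \<noteq> []" "all_blank E"
  shows "\<exists>E1. all_blank E1 \<and> reaches (D BGR, [], Ot @ Bl # replicate b S1 @ E) (2 * length Ot + 8)
        (D EGR, [], S0 # S0 # S1 # S1 # Ot @ Bl # replicate b S1 @ E1)"
proof -
  let ?X = "replicate b S1 @ E"
  let ?E1 = "if b = 0 then Bl # tl E else E"
  have hX: "head_sym ?X \<noteq> S0" using assms(3) by (cases b) (auto simp: all_blank_head)
  have X': "head_sym ?X # tl ?X = replicate b S1 @ ?E1" using head_sym_Cons_tl_replicate[OF assms(3)] .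
  have "reaches (D BGR, [], Ot @ Bl # ?X) (Suc (length Ot)) (D BFZ, Bl # rev Ot, ?X)"
    using assms by (intro scanR_past_blank) auto
  also have "reaches \<dots> 1 (D CSEP, rev Ot, Bl # head_sym ?X # tl ?X)"
    using hX by (intro reaches_stepI) simp_all
  also have "reaches \<dots> 1 (D CCO, tl (rev Ot), head_sym (rev Ot) # Bl # head_sym ?X # tl ?X)"
    by (rule reaches_stepI; simp)
  also have "reaches \<dots> (length Ot) (D CCO, [], Bl # Ot @ Bl # head_sym ?X # tl ?X)"
    using assms by (intro scanL_to_left_end) auto
  also have "reaches \<dots> 1 (D CW1, [], Bl # S1 # Ot @ Bl # head_sym ?X # tl ?X)"
    by (rule reaches_stepI; simp)
  also have "reaches \<dots> 1 (D CW2, [], Bl # S1 # S1 # Ot @ Bl # head_sym ?X # tl ?X)"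
    by (rule reaches_stepI; simp)
  also have "reaches \<dots> 1 (D CW3, [], Bl # S0 # S1 # S1 # Ot @ Bl # head_sym ?X # tl ?X)"
    by (rule reaches_stepI; simp)
  also have "reaches \<dots> 1 (D EGR, [], S0 # S0 # S1 # S1 # Ot @ Bl # head_sym ?X # tl ?X)"
    by (rule reaches_stepI; simp)
  finally have "reaches (D BGR, [], Ot @ Bl # replicate b S1 @ E) (2 * length Ot + 8)
        (D EGR, [], S0 # S0 # S1 # S1 # Ot @ Bl # replicate b S1 @ ?E1)"
    unfolding X' by (rule reaches_mono) simp_all
  moreover have "all_blank ?E1" using assms(3) all_blank_tl by auto
  ultimately show ?thesis by blast
qed

lemma roundE:
  assumes "nonblank Ot" "Ot \<noteq> []" "all_blank E"
  shows "reaches (D EGR, [], Ot @ Bl # replicate (Suc b) S1 @ E) (2 * length Ot + 2 * b + 10)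
        (D EGR, [], S0 # S0 # S0 # S0 # Ot @ Bl # replicate b S1 @ Bl # Bl # tl E)"
proof -
  have "reaches (D EGR, [], Ot @ Bl # replicate (Suc b) S1 @ E) (Suc (length Ot))
      (D EGR2, Bl # rev Ot, replicate (Suc b) S1 @ E)"
    using assms by (intro scanR_past_blank) auto
  also have "reaches \<dots> (length (replicate (Suc b) S1))
      (D EGR2, rev (replicate (Suc b) S1) @ Bl # rev Ot, E)"
    by (intro scanR_nonblank) auto
  also have "reaches \<dots> 1 (D ERD, replicate b S1 @ Bl # rev Ot, S1 # Bl # tl E)"
    using assms(3) by (intro reaches_stepI) (simp_all add: all_blank_head replicate_app_Cons_same)
  also have "reaches \<dots> 1 (D ECL, tl (rev (replicate b S1) @ Bl # rev Ot),
      head_sym (rev (replicate b S1) @ Bl # rev Ot) # Bl # Bl # tl E)"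
    by (rule reaches_stepI; simp)
  also have "reaches \<dots> (length (replicate b S1))
      (D ECL, rev Ot, Bl # replicate b S1 @ Bl # Bl # tl E)"
    by (intro scanL_past_blank) auto
  also have "reaches \<dots> 1 (D ECO, tl (rev Ot),
      head_sym (rev Ot) # Bl # replicate b S1 @ Bl # Bl # tl E)"
    by (rule reaches_stepI; simp)
  also have "reaches \<dots> (length Ot) (D ECO, [], Bl # Ot @ Bl # replicate b S1 @ Bl # Bl # tl E)"
    using assms by (intro scanL_to_left_end) auto
  also have "reaches \<dots> 1 (D EW2, [], Bl # S0 # Ot @ Bl # replicate b S1 @ Bl # Bl # tl E)"
    by (rule reaches_stepI; simp)
  also have "reaches \<dots> 1 (D EW3, [], Bl # S0 # S0 # Ot @ Bl # replicate b S1 @ Bl # Bl # tl E)"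
    by (rule reaches_stepI; simp)
  also have "reaches \<dots> 1 (D EW4, [], Bl # S0 # S0 # S0 # Ot @ Bl # replicate b S1 @ Bl # Bl # tl E)"
    by (rule reaches_stepI; simp)
  also have "reaches \<dots> 1 (D EGR, [], S0 # S0 # S0 # S0 # Ot @ Bl # replicate b S1 @ Bl # Bl # tl E)"
    by (rule reaches_stepI; simp)
  finally show ?thesis by (rule reaches_mono) simp
qed

lemma loopE:
  "\<forall>Ot E. nonblank Ot \<longrightarrow> Ot \<noteq> [] \<longrightarrow> all_blank E \<longrightarrow> length Ot + 4 * b \<le> N \<longrightarrow>
   (\<exists>E'. all_blank E' \<and> reaches (D EGR, [], Ot @ Bl # replicate b S1 @ E) (b * (2 * N + 10))
        (D EGR, [], replicate (4 * b) S0 @ Ot @ Bl # E'))"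
proof (induct b)
  case 0 then show ?case by (auto intro: reaches_refl)
next
  case (Suc b)
  show ?case
  proof (intro allI impI)
    fix Ot E assume a: "nonblank Ot" "Ot \<noteq> []" "all_blank E" "length Ot + 4 * Suc b \<le> N"
    have r1: "reaches (D EGR, [], Ot @ Bl # replicate (Suc b) S1 @ E) (2 * length Ot + 2 * b + 10)
        (D EGR, [], (S0 # S0 # S0 # S0 # Ot) @ Bl # replicate b S1 @ (Bl # Bl # tl E))"
      using roundE[OF a(1-3)] by simp
    have "\<exists>E'. all_blank E'
        \<and> reaches (D EGR, [], (S0 # S0 # S0 # S0 # Ot) @ Bl # replicate b S1 @ (Bl # Bl # tl E))
        (b * (2 * N + 10))
        (D EGR, [], replicate (4 * b) S0 @ (S0 # S0 # S0 # S0 # Ot) @ Bl # E')"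
      by (rule Suc[rule_format]) (use a all_blank_tl[of E] in auto)
    then obtain E' where e: "all_blank E'" "reaches
        (D EGR, [], (S0 # S0 # S0 # S0 # Ot) @ Bl # replicate b S1 @ (Bl # Bl # tl E))
        (b * (2 * N + 10))
        (D EGR, [], replicate (4 * b) S0 @ (S0 # S0 # S0 # S0 # Ot) @ Bl # E')" by blast
    have "reaches (D EGR, [], Ot @ Bl # replicate (Suc b) S1 @ E)
        (2 * length Ot + 2 * b + 10 + b * (2 * N + 10))
        (D EGR, [], replicate (4 * b) S0 @ (S0 # S0 # S0 # S0 # Ot) @ Bl # E')"
      using reaches_trans[OF r1 e(2)] .
    moreover have "2 * length Ot + 2 * b + 10 + b * (2 * N + 10) \<le> Suc b * (2 * N + 10)"
        using a(4) by simp
    ultimately have "reaches (D EGR, [], Ot @ Bl # replicate (Suc b) S1 @ E) (Suc b * (2 * N + 10))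
        (D EGR, [], replicate (4 * Suc b) S0 @ Ot @ Bl # E')"
      by (elim reaches_conv) (simp_all add: replicate_app_Cons_Suc replicate_add_4)
    then show "\<exists>E'. all_blank E'
        \<and> reaches (D EGR, [], Ot @ Bl # replicate (Suc b) S1 @ E) (Suc b * (2 * N + 10))
        (D EGR, [], replicate (4 * Suc b) S0 @ Ot @ Bl # E')"
      using e(1) by blast
  qed
qed

lemma exitE:
  assumes "nonblank Ot" "Ot \<noteq> []" "all_blank E"
  shows "reaches (D EGR, [], Ot @ Bl # E) (2 * length Ot + 4)
      (MPc (MX TD) 0, [Bl], Ot @ Bl # Bl # tl E)"
proof -
  have "reaches (D EGR, [], Ot @ Bl # E) (Suc (length Ot)) (D EGR2, Bl # rev Ot, E)"
    using assms by (intro scanR_past_blank) auto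
  also have "reaches \<dots> 1 (D ERD, rev Ot, Bl # Bl # tl E)"
    using assms(3) by (intro reaches_stepI) (simp_all add: all_blank_head)
  also have "reaches \<dots> 1 (D FCO, tl (rev Ot), head_sym (rev Ot) # Bl # Bl # tl E)"
    by (rule reaches_stepI; simp)
  also have "reaches \<dots> (length Ot) (D FCO, [], Bl # Ot @ Bl # Bl # tl E)"
    using assms by (intro scanL_to_left_end) auto
  also have "reaches \<dots> 1 (MPc (MX TD) 0, [Bl], Ot @ Bl # Bl # tl E)"
    by (rule reaches_stepI; simp)
  finally show ?thesis by (rule reaches_mono) simp
qed

lemma start_diag:
  assumes "md = ModeDiag"
  shows "reaches (Start, [], r) 5 (D DGR1, [], [S0, S1, S1] @ Bl # head_sym r # tl r)"
proof -
  have "reaches (Start, [], r) 1 (D DS1, [], Bl # head_sym r # tl r)"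
    using assms by (intro reaches_stepI) simp_all
  also have "reaches \<dots> 1 (D DS2, [], Bl # Bl # head_sym r # tl r)"
    by (rule reaches_stepI; simp)
  also have "reaches \<dots> 1 (D DS3, [], Bl # S1 # Bl # head_sym r # tl r)"
    by (rule reaches_stepI; simp)
  also have "reaches \<dots> 1 (D DS4, [], Bl # S1 # S1 # Bl # head_sym r # tl r)"
    by (rule reaches_stepI; simp)
  also have "reaches \<dots> 1 (D DGR1, [], S0 # S1 # S1 # Bl # head_sym r # tl r)"
    by (rule reaches_stepI; simp)
  finally show ?thesis by (simp add: numeral_eq_Suc)
qed

lemma K_pairs: "reaches (C t K2, l, enc (double_bits u) @ X) (2 * length u)
    (C t K2, rev (enc (double_bits u)) @ l, X)"
proof (induct u arbitrary: l)
  case Nil then show ?case by (simp add: reaches_refl)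
next
  case (Cons a u)
  have "reaches (C t K2, l, bsym a # bsym a # enc (double_bits u) @ X) 1
      (C t (K3 (bsym a)), bsym a # l, bsym a # enc (double_bits u) @ X)"
    by (rule reaches_stepI; simp)
  also have "reaches \<dots> 1 (C t K2, bsym a # bsym a # l, enc (double_bits u) @ X)"
    by (rule reaches_stepI; simp)
  also have "reaches \<dots> (2 * length u) (C t K2, rev (enc (double_bits u)) @ bsym a # bsym a # l, X)"
    by (rule Cons)
  finally show ?case by (simp add: bsym_def)
qed

lemma K_phase:
  "reaches (C t K0, l, enc (double_bits u) @ S0 # S1 # Vr) (2 * length u + 5)
     (C t (RS True True), Bl # rev (enc (double_bits u)) @ Bl # tl l, Bl # Vr)"
proof -
  let ?r = "enc (double_bits u) @ S0 # S1 # Vr"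
  have hr: "head_sym ?r # tl ?r = ?r" by (cases u) auto
  have "reaches (C t K0, l, ?r) 1 (C t K1, tl l, head_sym l # head_sym ?r # tl ?r)"
    by (rule reaches_stepI; simp)
  also have "reaches \<dots> 1 (C t K2, Bl # tl l, ?r)"
    unfolding hr by (rule reaches_stepI; simp add: hr)
  also have "reaches \<dots> (2 * length u) (C t K2, rev (enc (double_bits u)) @ Bl # tl l, S0 # S1 # Vr)"
    by (rule K_pairs)
  also have "reaches \<dots> 1 (C t (K3 S0), S0 # rev (enc (double_bits u)) @ Bl # tl l, S1 # Vr)"
    by (rule reaches_stepI; simp)
  also have "reaches \<dots> 1 (C t K4, rev (enc (double_bits u)) @ Bl # tl l, S0 # Bl # Vr)"
    by (rule reaches_stepI; simp)
  also have "reaches \<dots> 1 (C t (RS True True), Bl # rev (enc (double_bits u)) @ Bl # tl l, Bl # Vr)"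
    by (rule reaches_stepI; simp)
  finally show ?thesis by (rule reaches_mono) simp
qed

lemma V_scan:
  assumes "Z \<noteq> []" "nonblank Z"
  shows "reaches (C t (V0 g f), l, Z @ R) (length Z) (C t (V1 g f), rev Z @ l, R)"
proof -
  obtain x xs where Z: "Z = x # xs" using assms by (cases Z) auto
  have "reaches (C t (V0 g f), l, x # xs @ R) 1 (C t (V1 g f), x # l, xs @ R)"
    using assms Z by (intro reaches_stepI) simp_all
  also have "reaches \<dots> (length xs) (C t (V1 g f), rev xs @ x # l, R)"
    using assms Z by (intro scanR_nonblank) auto
  finally show ?thesis using Z by simp
qed

lemma vpart_snoc:
  assumes "head_sym R = Bl"
  shows "reaches (C t (RS g f), Bl # rev Uc @ Bl # Lz, Bl # enc (v1 @ [c]) @ R) (2 * length v1 + 6)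
     (C t (SLs g f c False), rev Uc @ Bl # Lz, Bl # Bl # enc v1 @ Bl # Bl # tl R)"
proof -
  let ?Z = "enc v1 @ [bsym c]"
  have "reaches (C t (RS g f), Bl # rev Uc @ Bl # Lz, Bl # enc (v1 @ [c]) @ R) 1
         (C t (V0 g f), Bl # Bl # rev Uc @ Bl # Lz, ?Z @ R)"
    by (rule reaches_stepI; simp add: enc_snoc)
  also have "reaches \<dots> (length ?Z) (C t (V1 g f), rev ?Z @ Bl # Bl # rev Uc @ Bl # Lz, R)"
    by (intro V_scan) auto
  also have "reaches \<dots> 1 (C t (VR g f), rev (enc v1) @ Bl # Bl # rev Uc @ Bl # Lz,
      bsym c # Bl # tl R)"
    using assms by (intro reaches_stepI) simp_all
  also have "reaches \<dots> 1 (C t (VL g f c False), tl (rev (enc v1) @ Bl # Bl # rev Uc @ Bl # Lz),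
        head_sym (rev (enc v1) @ Bl # Bl # rev Uc @ Bl # Lz) # Bl # Bl # tl R)"
    by (rule reaches_stepI; simp)
  also have "reaches \<dots> (length (enc v1))
      (C t (VL g f c False), Bl # rev Uc @ Bl # Lz, Bl # enc v1 @ Bl # Bl # tl R)"
    by (intro scanL_past_blank) auto
  also have "reaches \<dots> 1 (C t (SLs g f c False), rev Uc @ Bl # Lz,
      Bl # Bl # enc v1 @ Bl # Bl # tl R)"
    by (rule reaches_stepI; simp)
  finally show ?thesis by (rule reaches_mono) simp
qed

lemma vpart_nil:
  assumes "head_sym R = Bl"
  shows "reaches (C t (RS g f), Bl # rev Uc @ Bl # Lz, Bl # enc [] @ R) 3
     (C t (SLs g f False True), rev Uc @ Bl # Lz, Bl # Bl # enc [] @ Bl # tl R)"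
proof -
  have "reaches (C t (RS g f), Bl # rev Uc @ Bl # Lz, Bl # enc [] @ R) 1
         (C t (V0 g f), Bl # Bl # rev Uc @ Bl # Lz, R)"
    by (rule reaches_stepI; simp)
  also have "reaches \<dots> 1 (C t (VL g f False True), Bl # rev Uc @ Bl # Lz, Bl # Bl # tl R)"
    using assms by (intro reaches_stepI) simp_all
  also have "reaches \<dots> 1 (C t (SLs g f False True), rev Uc @ Bl # Lz, Bl # Bl # Bl # tl R)"
    by (rule reaches_stepI; simp)
  finally show ?thesis by (simp add: numeral_eq_Suc)
qed

lemma skip_marks:
  "reaches (C t (UU g c e), tl (rev (X @ marks p) @ L), head_sym (rev (X @ marks p) @ L) # Rr)
      (2 * p)
       (C t (UU g c e), tl (rev X @ L), head_sym (rev X @ L) # marks p @ Rr)"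
proof (induct p arbitrary: Rr)
  case 0 then show ?case by (simp add: reaches_refl)
next
  case (Suc p)
  have "reaches (C t (UU g c e), S1 # rev (X @ marks p) @ L, S0 # Rr) 1
      (C t (U0 g c e), rev (X @ marks p) @ L, S1 # S0 # Rr)"
    by (rule reaches_stepI; simp)
  also have "reaches \<dots> 1 (C t (UU g c e), tl (rev (X @ marks p) @ L),
      head_sym (rev (X @ marks p) @ L) # S1 # S0 # Rr)"
    by (rule reaches_stepI; simp)
  also have "reaches \<dots> (2 * p)
      (C t (UU g c e), tl (rev X @ L), head_sym (rev X @ L) # marks p @ S1 # S0 # Rr)"
    by (rule Suc)
  finally have "reaches (C t (UU g c e), S1 # rev (X @ marks p) @ L, S0 # Rr) (2 * Suc p)
    (C t (UU g c e), tl (rev X @ L), head_sym (rev X @ L) # marks p @ S1 # S0 # Rr)" by simp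
  then show ?case unfolding marks_Suc' by simp
qed

lemma scanR_nonblank':
  assumes "q \<noteq> Halt" "\<And>a. a \<noteq> Bl \<Longrightarrow> ctrl md j MP q a = (q, a, MoveR)" "nonblank (x # xs)"
  shows "reaches (q, l, x # xs @ r) (Suc (length xs)) (q, rev xs @ x # l, r)"
  using scanR_nonblank[of q "x # xs" l r] assms by simp

lemma upart_snoc:
  "reaches (C t (SLs g False c e), rev (enc (double_bits (u1 @ [a])) @ marks p) @ Bl # Lz,
      Bl # Rr) (4 * p + 5)
     (C t (RS (tie_update g a c) False),
         Bl # rev (enc (double_bits u1) @ marks (Suc p)) @ Bl # Lz, Rr)"
proof -
  let ?X = "enc (double_bits (u1 @ [a]))"
  have "reaches (C t (SLs g False c e), rev (?X @ marks p) @ Bl # Lz, Bl # Rr) 1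
       (C t (UU g c e), tl (rev (?X @ marks p) @ Bl # Lz),
           head_sym (rev (?X @ marks p) @ Bl # Lz) # Bl # Rr)"
    by (rule reaches_stepI; simp)
  also have "reaches \<dots> (2 * p)
      (C t (UU g c e), tl (rev ?X @ Bl # Lz), head_sym (rev ?X @ Bl # Lz) # marks p @ Bl # Rr)"
    by (rule skip_marks)
  also have "reaches \<dots> 2 (C t (GoR (tie_update g a c)), S1 # rev (enc (double_bits u1)) @ Bl # Lz,
      S0 # marks p @ Bl # Rr)"
  proof (cases a)
    case True
    have "reaches (C t (UU g c e), tl (rev ?X @ Bl # Lz),
        head_sym (rev ?X @ Bl # Lz) # marks p @ Bl # Rr) 1
        (C t (UM (tie_update g True c)), rev (enc (double_bits u1)) @ Bl # Lz,
            S1 # S0 # marks p @ Bl # Rr)"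
      using True by (intro reaches_stepI) (simp_all add: enc_double_bits_snoc)
    also have "reaches \<dots> 1 (C t (GoR (tie_update g True c)),
        S1 # rev (enc (double_bits u1)) @ Bl # Lz, S0 # marks p @ Bl # Rr)"
      by (rule reaches_stepI; simp)
    finally show ?thesis using True by (simp add: numeral_eq_Suc)
  next
    case False
    have "reaches (C t (UU g c e), tl (rev ?X @ Bl # Lz),
        head_sym (rev ?X @ Bl # Lz) # marks p @ Bl # Rr) 1
        (C t (U0 g c e), rev (enc (double_bits u1)) @ Bl # Lz, S0 # S0 # marks p @ Bl # Rr)"
      using False by (intro reaches_stepI) (simp_all add: enc_double_bits_snoc)
    also have "reaches \<dots> 1 (C t (GoR (tie_update g False c)),
        S1 # rev (enc (double_bits u1)) @ Bl # Lz, S0 # marks p @ Bl # Rr)"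
      by (rule reaches_stepI; simp)
    finally show ?thesis using False by (simp add: numeral_eq_Suc)
  qed
  also have "reaches \<dots> (Suc (length (marks p)))
      (C t (GoR (tie_update g a c)),
      rev (marks p) @ S0 # S1 # rev (enc (double_bits u1)) @ Bl # Lz, Bl # Rr)"
    by (intro scanR_nonblank') auto
  also have "reaches \<dots> 1 (C t (RS (tie_update g a c) False),
      Bl # rev (marks p) @ S0 # S1 # rev (enc (double_bits u1)) @ Bl # Lz, Rr)"
    by (rule reaches_stepI; simp)
  finally show ?thesis by (elim reaches_conv) simp_all
qed

lemma upart_nil:
  "reaches (C t (SLs g False c False), rev (enc (double_bits []) @ marks p) @ Bl # Lz, Bl # Rr)
      (4 * p + 3)
     (C t (RS (tie_update g False c) False), Bl # rev (enc (double_bits []) @ marks p) @ Bl # Lz,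
         Rr)"
proof -
  have "reaches (C t (SLs g False c False), rev ([] @ marks p) @ Bl # Lz, Bl # Rr) 1
       (C t (UU g c False), tl (rev ([] @ marks p) @ Bl # Lz),
           head_sym (rev ([] @ marks p) @ Bl # Lz) # Bl # Rr)"
    by (rule reaches_stepI; simp)
  also have "reaches \<dots> (2 * p)
      (C t (UU g c False), tl (rev [] @ Bl # Lz), head_sym (rev [] @ Bl # Lz) # marks p @ Bl # Rr)"
    by (rule skip_marks)
  also have "reaches \<dots> 1 (C t (GoR (tie_update g False c)), Bl # Lz, marks p @ Bl # Rr)"
    by (rule reaches_stepI; simp)
  also have "reaches \<dots> (length (marks p))
      (C t (GoR (tie_update g False c)), rev (marks p) @ Bl # Lz, Bl # Rr)"
    by (intro scanR_nonblank) auto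
  also have "reaches \<dots> 1 (C t (RS (tie_update g False c) False), Bl # rev (marks p) @ Bl # Lz, Rr)"
    by (rule reaches_stepI; simp)
  finally show ?thesis by (elim reaches_conv) simp_all
qed

lemma out_word_nonblank: "nonblank (out_word tg g)" "out_word tg g \<noteq> []" "length (out_word tg g)
    \<le> 5"
  by (cases tg; auto)+

lemma upart_fin:
  "\<exists>R'. reaches (C t (SLs g False c True), rev (enc (double_bits []) @ marks p) @ Bl # Lz,
      Bl # Rr) (2 * p + 13)
     (Halt, Lz, out_word t (tie_update g False c) @ Bl # R')"
proof -
  have "reaches (C t (SLs g False c True), rev ([] @ marks p) @ Bl # Lz, Bl # Rr) 1
       (C t (UU g c True), tl (rev ([] @ marks p) @ Bl # Lz),
           head_sym (rev ([] @ marks p) @ Bl # Lz) # Bl # Rr)"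
    by (rule reaches_stepI; simp)
  also have "reaches \<dots> (2 * p)
      (C t (UU g c True), tl (rev [] @ Bl # Lz), head_sym (rev [] @ Bl # Lz) # marks p @ Bl # Rr)"
    by (rule skip_marks)
  also have "reaches \<dots> 1 (Wr (out_word t (tie_update g False c)) 0, Lz, Bl # marks p @ Bl # Rr)"
    by (rule reaches_stepI; simp)
  also have "reaches \<dots> (2 * length (out_word t (tie_update g False c)) + 1)
      (Halt, Lz, out_word t (tie_update g False c) @ Bl #
         tl (drop (length (out_word t (tie_update g False c))) (Bl # marks p @ Bl # Rr)))"
    using out_word_nonblank by (intro Wr_full) auto
  finally show ?thesis using out_word_nonblank(3)[of t "tie_update g False c"]
      by (intro exI) (elim reaches_conv, simp_all)
qed

lemma sls_first:
  "reaches (C t (SLs g True c e), rev Uc @ Bl # Lz, Bl # Rr) 1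
      (C t (RS (tie_update g False c) False), Bl # rev Uc @ Bl # Lz, Rr)"
  by (rule reaches_stepI; simp)

lemma less_tie_snoc: "less_tie g (bits_val (u1 @ [a])) (bits_val (v1 @ [c]))
    = less_tie (tie_update g a c) (bits_val u1) (bits_val v1)"
  by (simp add: bits_val_snoc less_tie_step)

lemma less_tie_snoc_left: "less_tie g (bits_val (u1 @ [a])) (bits_val [])
    = less_tie (tie_update g a False) (bits_val u1) (bits_val [])"
  using less_tie_step[of g "bits_val u1" a 0 False] by (simp add: bits_val_snoc)

lemma less_tie_snoc_right: "less_tie g (bits_val []) (bits_val (v1 @ [c]))
    = less_tie (tie_update g False c) (bits_val []) (bits_val v1)"
  using less_tie_step[of g 0 False "bits_val v1" c] by (simp add: bits_val_snoc)

lemma tie_update_FF[simp]: "tie_update g False False = g" by (simp add: tie_update_def)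

abbreviation cmp_conf :: "tag \<Rightarrow> bool \<Rightarrow> bool list \<Rightarrow> nat \<Rightarrow> bool list \<Rightarrow> sym list \<Rightarrow> sym list
    \<Rightarrow> st gconf" where
  "cmp_conf t g u p v Lz R \<equiv>
      (C t (RS g False), Bl # rev (enc (double_bits u) @ marks p) @ Bl # Lz, Bl # enc v @ R)"

lemma cmp_finish:
  assumes "head_sym R = Bl" "p \<le> K"
  shows "\<exists>R'. reaches (cmp_conf t g [] p [] Lz R) (6 * K + 20) (Halt, Lz, out_word t g @ Bl # R')"
proof -
  have r1: "reaches (cmp_conf t g [] p [] Lz R) 3
      (C t (SLs g False False True), rev (enc (double_bits []) @ marks p) @ Bl # Lz,
          Bl # (Bl # enc [] @ Bl # tl R))"
    using assms by (intro vpart_nil)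
  obtain R' where r2: "reaches (C t (SLs g False False True),
      rev (enc (double_bits []) @ marks p) @ Bl # Lz,
      Bl # (Bl # enc [] @ Bl # tl R)) (2 * p + 13)
          (Halt, Lz, out_word t (tie_update g False False) @ Bl # R')"
    using upart_fin by blast
  have "reaches (cmp_conf t g [] p [] Lz R) (3 + (2 * p + 13)) (Halt, Lz, out_word t g @ Bl # R')"
    using reaches_trans[OF r1 r2] by simp
  then show ?thesis using assms(2) by (intro exI) (erule reaches_mono, simp)
qed

lemma cmp_round_left:
  assumes "head_sym R = Bl"
  shows "reaches (cmp_conf t g (u1 @ [x]) p [] Lz R) (4 * p + 8)
      (cmp_conf t (tie_update g x False) u1 (Suc p) [] Lz (Bl # tl R))"
proof -
  have "reaches (cmp_conf t g (u1 @ [x]) p [] Lz R) 3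
      (C t (SLs g False False True), rev (enc (double_bits (u1 @ [x])) @ marks p) @ Bl # Lz,
          Bl # (Bl # enc [] @ Bl # tl R))"
    using assms by (intro vpart_nil)
  also have "reaches \<dots> (4 * p + 5) (cmp_conf t (tie_update g x False) u1 (Suc p) [] Lz (Bl # tl R))"
    by (rule upart_snoc)
  finally show ?thesis by (rule reaches_mono) simp
qed

lemma cmp_round_right:
  assumes "head_sym R = Bl"
  shows "reaches (cmp_conf t g [] p (v1 @ [c]) Lz R) (2 * length v1 + 4 * p + 9)
    (cmp_conf t (tie_update g False c) [] p v1 Lz (Bl # Bl # tl R))"
proof -
  have "reaches (cmp_conf t g [] p (v1 @ [c]) Lz R) (2 * length v1 + 6)
      (C t (SLs g False c False), rev (enc (double_bits []) @ marks p) @ Bl # Lz,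
          Bl # (Bl # enc v1 @ Bl # Bl # tl R))"
    using assms by (intro vpart_snoc)
  also have "reaches \<dots> (4 * p + 3) (cmp_conf t (tie_update g False c) [] p v1 Lz (Bl # Bl # tl R))"
    by (rule upart_nil)
  finally show ?thesis by (rule reaches_mono) simp
qed

lemma cmp_round_both:
  assumes "head_sym R = Bl"
  shows "reaches (cmp_conf t g (u1 @ [x]) p (v1 @ [c]) Lz R) (2 * length v1 + 4 * p + 11)
    (cmp_conf t (tie_update g x c) u1 (Suc p) v1 Lz (Bl # Bl # tl R))"
proof -
  have "reaches (cmp_conf t g (u1 @ [x]) p (v1 @ [c]) Lz R) (2 * length v1 + 6)
      (C t (SLs g False c False), rev (enc (double_bits (u1 @ [x])) @ marks p) @ Bl # Lz,
          Bl # (Bl # enc v1 @ Bl # Bl # tl R))"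
    using assms by (intro vpart_snoc)
  also have "reaches \<dots> (4 * p + 5)
      (cmp_conf t (tie_update g x c) u1 (Suc p) v1 Lz (Bl # Bl # tl R))"
    by (rule upart_snoc)
  finally show ?thesis by (rule reaches_mono) simp
qed

lemma cmp_loop:
  assumes "head_sym R = Bl" "length u + length v \<le> n" "p + length u \<le> K" "length v \<le> K"
  shows "\<exists>R'. reaches (cmp_conf t g u p v Lz R) ((n + 1) * (6 * K + 20))
    (Halt, Lz, out_word t (less_tie g (bits_val u) (bits_val v)) @ Bl # R')"
  using assms
proof (induct n arbitrary: u v p R g)
  case 0
  then show ?case using cmp_finish[where R = R and p = p and K = K and t = t and g = g and Lz = Lz]
    by (simp add: less_tie_def)
next
  case (Suc n)
  have continue: "\<exists>R'. reaches c ((Suc n + 1) * (6 * K + 20)) (Halt, Lz, out_word t b @ Bl # R')"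
    if "reaches c B c'" "\<exists>R'. reaches c' ((n + 1) * (6 * K + 20))
        (Halt, Lz, out_word t b @ Bl # R')"
      "B \<le> 6 * K + 20"
    for c B c' b
    using that reaches_trans by (fastforce elim!: reaches_mono)
  consider "u = []" "v = []" | u1 x where "u = u1 @ [x]" "v = []" | v1 c where "u = []" "v
      = v1 @ [c]"
    | u1 x v1 c where "u = u1 @ [x]" "v = v1 @ [c]"
    by (metis rev_exhaust)
  then show ?case
  proof cases
    case 1
    then obtain R' where r: "reaches (cmp_conf t g u p v Lz R) (6 * K + 20)
        (Halt, Lz, out_word t g @ Bl # R')"
      using cmp_finish[where R = R and p = p and K = K and t = t and g = g and Lz = Lz] Suc.prems
          by auto
    have "reaches (cmp_conf t g u p v Lz R) ((Suc n + 1) * (6 * K + 20))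
        (Halt, Lz, out_word t g @ Bl # R')"
      by (rule reaches_mono[OF r]) simp
    then show ?thesis using 1 by (intro exI[of _ R']) (simp add: less_tie_def)
  next
    case (2 u1 x)
    have "reaches (cmp_conf t g u p v Lz R) (4 * p + 8)
        (cmp_conf t (tie_update g x False) u1 (Suc p) [] Lz (Bl # tl R))"
      using cmp_round_left[OF Suc.prems(1)] 2 by simp
    moreover have "less_tie g (bits_val u) (bits_val v)
        = less_tie (tie_update g x False) (bits_val u1) (bits_val [])"
      using 2 less_tie_snoc_left by simp
    ultimately show ?thesis
      using Suc.hyps[of "Bl # tl R" u1 "[]" "Suc p" "tie_update g x False"] Suc.prems 2
      by (intro continue) auto
  next
    case (3 v1 c)
    have "reaches (cmp_conf t g u p v Lz R) (2 * length v1 + 4 * p + 9)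
        (cmp_conf t (tie_update g False c) [] p v1 Lz (Bl # Bl # tl R))"
      using cmp_round_right[OF Suc.prems(1)] 3 by simp
    moreover have "less_tie g (bits_val u) (bits_val v)
        = less_tie (tie_update g False c) (bits_val []) (bits_val v1)"
      using 3 less_tie_snoc_right by simp
    ultimately show ?thesis
      using Suc.hyps[of "Bl # Bl # tl R" "[]" v1 p "tie_update g False c"] Suc.prems 3
      by (intro continue) auto
  next
    case (4 u1 x v1 c)
    have "reaches (cmp_conf t g u p v Lz R) (2 * length v1 + 4 * p + 11)
        (cmp_conf t (tie_update g x c) u1 (Suc p) v1 Lz (Bl # Bl # tl R))"
      using cmp_round_both[OF Suc.prems(1)] 4 by simp
    moreover have "less_tie g (bits_val u) (bits_val v)
        = less_tie (tie_update g x c) (bits_val u1) (bits_val v1)"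
      using 4 less_tie_snoc by simp
    ultimately show ?thesis
      using Suc.hyps[of "Bl # Bl # tl R" u1 v1 "Suc p" "tie_update g x c"] Suc.prems 4
      by (intro continue) auto
  qed
qed

definition compare_time :: "nat \<Rightarrow> nat" where "compare_time m = 2 * m + 12 + (m + 1) * (6 * m + 20)"

lemma enc_pair: "enc (pair u v) = enc (double_bits u) @ S0 # S1 # enc v"
  by (simp add: pair_eq_double_bits')

(* The first round compares the bit 0 appended to u (doubling it) with the last bit of v. *)
lemma cmp_first_round:
  assumes "head_sym R = Bl"
  obtains v' R1 where
    "reaches (C t (RS True True), Bl # rev (enc (double_bits u)) @ Bl # Lz, Bl # enc v @ R)
        (2 * length v + 7)
      (cmp_conf t True u 0 v' Lz R1)"
    "head_sym R1 = Bl" "length v' \<le> length v"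
    "less_tie True (bits_val u) (bits_val v') \<longleftrightarrow> 2 * bits_val u \<le> bits_val v"
proof (cases v rule: rev_cases)
  case Nil
  have "reaches (C t (RS True True), Bl # rev (enc (double_bits u)) @ Bl # Lz, Bl # enc [] @ R) 3
      (C t (SLs True True False True), rev (enc (double_bits u)) @ Bl # Lz,
          Bl # (Bl # enc [] @ Bl # tl R))"
    using assms by (intro vpart_nil)
  also have "reaches \<dots> 1 (cmp_conf t True u 0 [] Lz (Bl # tl R))"
    using sls_first[of t True False True "enc (double_bits u)" Lz "Bl # enc [] @ Bl # tl R"] by simp
  finally have "reaches (C t (RS True True), Bl # rev (enc (double_bits u)) @ Bl # Lz,
      Bl # enc [] @ R)
      (2 * length v + 7) (cmp_conf t True u 0 [] Lz (Bl # tl R))"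
    using Nil by (elim reaches_mono) simp
  then show thesis using Nil by (intro that) (auto simp: less_tie_def)
next
  case (snoc v1 c)
  have "reaches (C t (RS True True), Bl # rev (enc (double_bits u)) @ Bl # Lz,
      Bl # enc (v1 @ [c]) @ R) (2 * length v1 + 6)
      (C t (SLs True True c False), rev (enc (double_bits u)) @ Bl # Lz,
          Bl # (Bl # enc v1 @ Bl # Bl # tl R))"
    using assms by (intro vpart_snoc)
  also have "reaches \<dots> 1 (cmp_conf t True u 0 v1 Lz (Bl # Bl # tl R))"
    using sls_first[of t True c False "enc (double_bits u)" Lz "Bl # enc v1 @ Bl # Bl # tl R"]
    by (cases c) (simp_all add: tie_update_def)
  finally have "reaches (C t (RS True True), Bl # rev (enc (double_bits u)) @ Bl # Lz,
      Bl # enc (v1 @ [c]) @ R)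
      (2 * length v + 7) (cmp_conf t True u 0 v1 Lz (Bl # Bl # tl R))"
    using snoc by (elim reaches_mono) simp
  then show thesis using snoc by (intro that) (auto simp: less_tie_def bits_val_snoc)
qed

lemma compare_phase:
  assumes "head_sym R = Bl"
  shows "\<exists>R'. reaches (C t K0, l, enc (pair u v) @ R) (compare_time (length u + length v))
     (Halt, tl l, out_word t (2 * bits_val u \<le> bits_val v) @ Bl # R')"
proof -
  let ?K = "length u + length v"
  have k: "reaches (C t K0, l, enc (pair u v) @ R) (2 * length u + 5)
     (C t (RS True True), Bl # rev (enc (double_bits u)) @ Bl # tl l, Bl # enc v @ R)"
    unfolding enc_pair using K_phase[of t l u "enc v @ R"] by simp
  obtain v' R1 where first:
    "reaches (C t (RS True True), Bl # rev (enc (double_bits u)) @ Bl # tl l, Bl # enc v @ R)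
        (2 * length v + 7)
      (cmp_conf t True u 0 v' (tl l) R1)"
    "head_sym R1 = Bl" "length v' \<le> length v"
    "less_tie True (bits_val u) (bits_val v') \<longleftrightarrow> 2 * bits_val u \<le> bits_val v"
    using cmp_first_round[OF assms] by blast
  obtain R' where "reaches (cmp_conf t True u 0 v' (tl l) R1) ((?K + 1) * (6 * ?K + 20))
      (Halt, tl l, out_word t (less_tie True (bits_val u) (bits_val v')) @ Bl # R')"
    using cmp_loop[OF first(2), where n = ?K and K = ?K and u = u and v = v' and p = 0 and t
        = t and g = True and Lz = "tl l"] first(3) by auto
  from reaches_trans[OF k reaches_trans[OF first(1) this]] show ?thesis
    using first(4) by (intro exI) (elim reaches_conv, simp_all add: compare_time_def)
qed

lemma P_pairs: "reaches (PR \<sigma>, l, enc (double_bits x) @ X) (2 * length x)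
    (PR (foldl (aut_step j) \<sigma> x), rev (enc (double_bits x)) @ l, X)"
proof (induct x arbitrary: l \<sigma>)
  case Nil then show ?case by (simp add: reaches_refl)
next
  case (Cons a x)
  have "reaches (PR \<sigma>, l, bsym a # bsym a # enc (double_bits x) @ X) 1
      (PR2 \<sigma> (bsym a), bsym a # l, bsym a # enc (double_bits x) @ X)"
    by (rule reaches_stepI; simp)
  also have "reaches \<dots> 1 (PR (aut_step j \<sigma> a), bsym a # bsym a # l, enc (double_bits x) @ X)"
    by (rule reaches_stepI; simp)
  also have "reaches \<dots> (2 * length x)
      (PR (foldl (aut_step j) (aut_step j \<sigma> a) x),
      rev (enc (double_bits x)) @ bsym a # bsym a # l, X)"
    by (rule Cons)
  finally show ?case by (simp add: bsym_def)
qed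

lemma scan_pred:
  assumes "md = ModePred"
  shows "reaches (Start, [], enc (pair x [b])) (4 * length x + 7)
    (MPc (if special j x then MX (TP b) else MY) 0, [Bl], enc (pair x [special j x \<or> b]))"
proof -
  let ?sp = "special j x"
  let ?w = "if ?sp then S1 else bsym b"
  have e: "enc (pair x [b]) = enc (double_bits x) @ S0 # S1 # [bsym b]"
      by (simp add: pair_eq_double_bits' bsym_def)
  have "reaches (Start, [], enc (double_bits x) @ S0 # S1 # [bsym b]) 1
      (PR (ZA 0), [], enc (double_bits x) @ S0 # S1 # [bsym b])"
    by (insert assms, rule reaches_stepI; simp add: head_sym_Cons_tl)
  also have "reaches \<dots> (2 * length x)
      (PR (foldl (aut_step j) (ZA 0) x), rev (enc (double_bits x)) @ [], S0 # S1 # [bsym b])"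
    by (rule P_pairs)
  also have "reaches \<dots> 1 (PR2 (foldl (aut_step j) (ZA 0) x) S0, S0 # rev (enc (double_bits x)),
      S1 # [bsym b])"
    by (rule reaches_stepI; simp)
  also have "reaches \<dots> 1 (PB (foldl (aut_step j) (ZA 0) x), S1 # S0 # rev (enc (double_bits x)),
      [bsym b])"
    by (rule reaches_stepI; simp)
  also have "reaches \<dots> 1 (PL ?sp b, S0 # rev (enc (double_bits x)), S1 # [?w])"
    by (cases "special j x") (rule reaches_stepI; simp add: aut_special)+
  also have "reaches \<dots> (length (enc (double_bits x) @ [S0, S1]))
      (PL ?sp b, [], Bl # (enc (double_bits x) @ [S0, S1]) @ [?w])"
    using scanL_to_left_end[of "PL ?sp b" "enc (double_bits x) @ [S0, S1]" "[?w]"] by simp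
  also have "reaches \<dots> 1 (MPc (if ?sp then MX (TP b) else MY) 0, [Bl],
      (enc (double_bits x) @ [S0, S1]) @ [?w])"
    by (rule reaches_stepI; simp)
  finally show ?thesis unfolding e
      by (elim reaches_conv) (simp_all add: pair_eq_double_bits' bsym_def)
qed

lemma run_half:
  assumes "md = ModeHalf" "r \<noteq> []"
  shows "\<exists>R'. reaches (Start, [], r) 14 (Halt, [], [S1, S1, S0, S1, S1, S0] @ Bl # R')"
proof -
  have "reaches (Start, [], r) 1 (Wr [S1, S1, S0, S1, S1, S0] 0, [], r)"
    by (insert assms, rule reaches_stepI; simp add: head_sym_Cons_tl)
  also have "reaches \<dots> (2 * length [S1, S1, S0, S1, S1, S0] + 1)
      (Halt, [], [S1, S1, S0, S1, S1, S0] @ Bl # tl (drop (length [S1, S1, S0, S1, S1, S0]) r))"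
    using Wr_full[of "[S1, S1, S0, S1, S1, S0]" "[]" r] by simp
  finally show ?thesis by (intro exI) (elim reaches_conv, simp_all)
qed

end

lemma reaches_grun: "reaches md j MP c B c' \<Longrightarrow> fst c' = Halt \<Longrightarrow> B \<le> T \<Longrightarrow> grun (ctrl md j MP) Halt T c
    = c'"
  unfolding reaches_def reach_def by (metis grun_halt_mono le_trans)

lemma reaches_tape_length: "reaches md j MP c B c' \<Longrightarrow> tape_length c' \<le> tape_length c + 2 * B"
  unfolding reaches_def reach_def using tape_length_grun
      by (metis add_le_mono le_refl mult_le_mono order_trans)

lemma tm_step_halted: "fst c = 1 \<Longrightarrow> tm_step M c = c"
  by (cases c) (simp add: tm_step_def)

lemma tm_run_halted: "fst (tm_run M t c) = 1 \<Longrightarrow> t \<le> T \<Longrightarrow> tm_run M T c = tm_run M t c"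
proof -
  assume a: "fst (tm_run M t c) = 1" "t \<le> T"
  then obtain d where T: "T = t + d" by (metis le_iff_add)
  have "(tm_step M ^^ d) (tm_run M t c) = tm_run M t c" for d
    by (induct d) (simp_all add: tm_step_halted a(1))
  then show ?thesis unfolding T tm_run_def by (simp add: funpow_add add.commute[of t d])
qed

lemma map_S1_eq_enc: "\<forall>a\<in>set xs. a \<noteq> Bl \<Longrightarrow> map (\<lambda>a. a = S1) xs = y \<Longrightarrow> xs = enc y"
proof (induct xs arbitrary: y)
  case Nil then show ?case by simp
next
  case (Cons a xs)
  then obtain b y' where y: "y = b # y'" by (cases y) auto
  have "a = (if b then S1 else S0)" using Cons y by (cases a) auto
  then show ?case using Cons y by auto
qed

lemma head_dropWhile: "head_sym (dropWhile (\<lambda>a. a \<noteq> Bl) r) = Bl"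
  by (induct r) auto

lemma sim_phase:
  assumes h: "halted (tm_run MP T (init_conf w))"
    and o: "tm_output (tm_run MP T (init_conf w)) = pair u v"
    and bl: "all_blank l0" "all_blank E"
  shows "\<exists>l' R. reaches md j MP (MPc m 0, l0, enc w @ E) T (sim_exit m, l', enc (pair u v) @ R)
      \<and> head_sym R = Bl"
proof -
  let ?co = "(0::nat, l0, enc w @ E)"
  have be: "blank_eq (init_conf w) ?co"
    using bl by (simp add: blank_eq_def init_conf_def trim_blanks_append_blanks
        trim_blanks_all_blank all_blank_def)
  have hT: "fst (tm_run MP T ?co) = 1"
    using blank_eq_halted[OF blank_eq_run[OF be, of MP T]] h by (simp add: halted_def)
  define t0 where "t0 = (LEAST t. fst (tm_run MP t ?co) = 1)"
  have t0: "fst (tm_run MP t0 ?co) = 1" unfolding t0_def by (rule LeastI[of _ T]) (rule hT)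
  have t0T: "t0 \<le> T" unfolding t0_def by (rule Least_le) (rule hT)
  have nh: "\<forall>t'<t0. fst (tm_run MP t' ?co) \<noteq> 1" unfolding t0_def using not_less_Least by blast
  define f where "f q = (if q = 1 then sim_exit m else MPc m q)" for q
  have emb: "grun (ctrl md j MP) Halt t0 (f (fst ?co), snd ?co)
      = (f (fst (tm_run MP t0 ?co)), snd (tm_run MP t0 ?co))"
    by (rule embed_run[OF _ _ nh]) (auto simp: f_def split: prod.splits)
  obtain l' r' where lr: "snd (tm_run MP t0 ?co) = (l', r')" by (metis prod.collapse)
  have run0: "grun (ctrl md j MP) Halt t0 (MPc m 0, l0, enc w @ E) = (sim_exit m, l', r')"
    using emb t0 lr by (simp add: f_def)
  have "tm_output (tm_run MP t0 ?co) = tm_output (tm_run MP T ?co)"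
    using tm_run_halted[OF t0 t0T] by simp
  also have "\<dots> = pair u v" using blank_eq_output[OF blank_eq_run[OF be, of MP T]] o by simp
  finally have "map (\<lambda>a. a = S1) (takeWhile (\<lambda>a. a \<noteq> Bl) r') = pair u v"
    using lr by (metis tm_output_def prod.collapse snd_conv)
  then have tw: "takeWhile (\<lambda>a. a \<noteq> Bl) r' = enc (pair u v)"
    by (intro map_S1_eq_enc) (auto dest: set_takeWhileD)
  let ?R = "dropWhile (\<lambda>a. a \<noteq> Bl) r'"
  have "r' = enc (pair u v) @ ?R" using tw takeWhile_dropWhile_id by metis
  then have "reaches md j MP (MPc m 0, l0, enc w @ E) T (sim_exit m, l', enc (pair u v) @ ?R)"
    unfolding reaches_def reach_def using run0 t0T by metis
  then show ?thesis using head_dropWhile by blast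
qed

definition prelude_time :: "nat \<Rightarrow> nat" where "prelude_time m = m * (4 * (6 * m + 10) + 36) + 60"

lemma prelude_diag_suffix:
  assumes md: "md = ModeDiag"
    and N: "N = 6 * (k + 1 + length w) + 10" and W: "W = enc (double_bits w) @ [S0, S1, S1]"
  shows "\<exists>E. all_blank E \<and> reaches md j MP (Start, [], enc (replicate k False @ True # w))
     (5 + length w * (4 * N + 8) + (2 * length W + 2 * k + 8))
         (D BGR, [], (S1 # S1 # W) @ Bl # replicate k S0 @ E)"
proof -
  let ?y = "replicate k False @ True # w"
  have s1: "reaches md j MP (Start, [], enc ?y) 5 (D DGR1, [], [S0, S1, S1] @ Bl # enc ?y @ [])"
    using start_diag[where j = j and MP = MP, OF md, of "enc ?y"] head_sym_Cons_tl[of "enc ?y"] by simp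
  obtain E1 where e1: "all_blank E1" "reaches md j MP
      (D DGR1, [], [S0, S1, S1] @ Bl # enc ?y @ []) (length w * (4 * N + 8))
      (D DGR1, [], W @ Bl # (replicate k S0 @ [S1]) @ E1)"
    using loopA[where md = md and j = j and MP = MP and w = w and k = k and N = N, rule_format,
        where Ot = "[S0, S1, S1]" and E = "[]"]
    unfolding N W by auto
  have "reaches md j MP (D DGR1, [], W @ Bl # (replicate k S0 @ [S1]) @ E1)
      (2 * length W + 2 * length (replicate k S0) + 8)
      ((if S1 \<in> set (replicate k S0) then D DGR1 else D BGR), [],
          S1 # S1 # W @ Bl # replicate k S0 @ Bl # Bl # tl E1)"
    by (rule roundA[where md = md and j = j and MP = MP]) (use e1 in \<open>auto simp: W\<close>)
  then have s2: "reaches md j MP (D DGR1, [], W @ Bl # (replicate k S0 @ [S1]) @ E1)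
      (2 * length W + 2 * k + 8)
      (D BGR, [], (S1 # S1 # W) @ Bl # replicate k S0 @ Bl # Bl # tl E1)"
    by simp
  have "all_blank (Bl # Bl # tl E1)" using e1(1) all_blank_tl by simp
  then show ?thesis using reaches_trans[OF reaches_trans[OF s1 e1(2)] s2] by blast
qed

lemma prelude_diag_zeros:
  assumes "nonblank Ot" "Ot \<noteq> []" "all_blank E" "length Ot + 6 * k + 4 \<le> N"
  shows "\<exists>E'. all_blank E' \<and> reaches md j MP (D BGR, [], Ot @ Bl # replicate k S0 @ E)
     (k * (2 * N + 8) + (2 * length Ot + 4 * k + 8) + k * (2 * N + 10) +
         (2 * length Ot + 12 * k + 12))
     (MPc (MX TD) 0, [Bl], (replicate (4 * k) S0 @ S0 # S0 # S1 # S1 # replicate (2 * k) S0 @ Ot)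
         @ Bl # E')"
proof -
  obtain E2 where e2: "all_blank E2" "reaches md j MP (D BGR, [], Ot @ Bl # replicate k S0 @ E)
      (k * (2 * N + 8)) (D BGR, [], (replicate (2 * k) S0 @ Ot) @ Bl # replicate k S1 @ E2)"
    using loopB[where md = md and j = j and MP = MP and a = k and N = N, rule_format, where Ot
        = Ot and b = 0 and E = E] assms by auto
  let ?O2 = "replicate (2 * k) S0 @ Ot"
  obtain E3 where e3: "all_blank E3" "reaches md j MP (D BGR, [], ?O2 @ Bl # replicate k S1 @ E2)
      (2 * length ?O2 + 8)
      (D EGR, [], (S0 # S0 # S1 # S1 # ?O2) @ Bl # replicate k S1 @ E3)"
    using exitB[where md = md and j = j and MP = MP and Ot = "?O2" and E = E2 and b = k] assms
        e2(1) by auto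
  let ?O4 = "S0 # S0 # S1 # S1 # ?O2"
  obtain E4 where e4: "all_blank E4" "reaches md j MP (D EGR, [], ?O4 @ Bl # replicate k S1 @ E3)
      (k * (2 * N + 10))
      (D EGR, [], (replicate (4 * k) S0 @ ?O4) @ Bl # E4)"
    using loopE[where md = md and j = j and MP = MP and b = k and N = N, rule_format, where Ot
        = "?O4" and E = E3] assms e3(1) by auto
  have e5: "reaches md j MP (D EGR, [], (replicate (4 * k) S0 @ ?O4) @ Bl # E4)
      (2 * length (replicate (4 * k) S0 @ ?O4) + 4)
     (MPc (MX TD) 0, [Bl], (replicate (4 * k) S0 @ ?O4) @ Bl # Bl # tl E4)"
    using exitE[where md = md and j = j and MP = MP and Ot = "replicate (4 * k) S0 @ ?O4" and E
        = E4] assms e4(1) by simp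
  have "all_blank (Bl # tl E4)" using e4(1) all_blank_tl by simp
  moreover have "reaches md j MP (D BGR, [], Ot @ Bl # replicate k S0 @ E)
     (k * (2 * N + 8) + (2 * length Ot + 4 * k + 8) + k * (2 * N + 10) +
         (2 * length Ot + 12 * k + 12))
     (MPc (MX TD) 0, [Bl], (replicate (4 * k) S0 @ ?O4) @ Bl # Bl # tl E4)"
    using reaches_trans[OF reaches_trans[OF reaches_trans[OF e2(2) e3(2)] e4(2)] e5]
    by (elim reaches_conv) (simp_all add: algebra_simps)
  ultimately show ?thesis by blast
qed

lemma prelude_diag:
  assumes md: "md = ModeDiag"
  shows "\<exists>E. all_blank E \<and> reaches md j MP (Start, [], enc (replicate k False @ True # w))
      (prelude_time (k + 1 + length w))
     (MPc (MX TD) 0, [Bl], enc (pair (pair (replicate k False) (replicate k False @ True # w))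
         [True]) @ Bl # E)"
proof -
  define N where "N = 6 * (k + 1 + length w) + 10"
  define W where "W = enc (double_bits w) @ [S0, S1, S1]"
  obtain E1 where e1: "all_blank E1" "reaches md j MP
      (Start, [], enc (replicate k False @ True # w))
      (5 + length w * (4 * N + 8) + (2 * length W + 2 * k + 8))
          (D BGR, [], (S1 # S1 # W) @ Bl # replicate k S0 @ E1)"
    using prelude_diag_suffix[where j = j and MP = MP, OF md N_def W_def] by blast
  obtain E2 where e2: "all_blank E2" "reaches md j MP
      (D BGR, [], (S1 # S1 # W) @ Bl # replicate k S0 @ E1)
      (k * (2 * N + 8) + (2 * length (S1 # S1 # W) + 4 * k + 8) + k * (2 * N + 10) +
          (2 * length (S1 # S1 # W) + 12 * k + 12))
      (MPc (MX TD) 0, [Bl], (replicate (4 * k) S0 @ S0 # S0 # S1 # S1 # replicate (2 * k) S0 @ S1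
          # S1 # W) @ Bl # E2)"
    using prelude_diag_zeros[where md = md and j = j and MP = MP and Ot = "S1 # S1 # W" and E
        = E1 and k = k and N = N] e1(1) unfolding N_def W_def by auto
  have "replicate (4 * k) S0 @ S0 # S0 # S1 # S1 # replicate (2 * k) S0 @ S1 # S1 # W
      = enc (pair (pair (replicate k False) (replicate k False @ True # w)) [True])"
    unfolding W_def by (simp add: pair_eq_double_bits' numeral_eq_Suc replicate_add[symmetric]
        mult_2 algebra_simps)
  moreover have "5 + length w * (4 * N + 8) + (2 * length W + 2 * k + 8)
      + (k * (2 * N + 8) + (2 * length (S1 # S1 # W) + 4 * k + 8) + k * (2 * N + 10) +
          (2 * length (S1 # S1 # W) + 12 * k + 12))
      \<le> prelude_time (k + 1 + length w)"
    unfolding prelude_time_def N_def W_def by (simp add: algebra_simps)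
  ultimately show ?thesis using reaches_trans[OF e1(2) e2(2)] e2(1) by (auto elim!: reaches_conv)
qed

lemma tape_length_simps[simp]: "tape_length (q, l, r) = length l + length r"
    by (simp add: tape_length_def)

lemma compare_time_mono: "a \<le> b \<Longrightarrow> compare_time a \<le> compare_time b"
  unfolding compare_time_def by (intro add_mono mult_mono) auto

lemma run_diag_marked:
  assumes md: "md = ModeDiag"
    and y: "y = replicate k False @ True # w" and z: "z = pair (replicate k False) y"
    and h: "halted (tm_run MP TT (init_conf (pair z [True])))"
    and o: "tm_output (tm_run MP TT (init_conf (pair z [True]))) = pair u v"
  shows "\<exists>l R. reaches md j MP (Start, [], enc y)
      (prelude_time (length y) + TT + compare_time (length y + 2 * (prelude_time (length y) + TT)))
     (Halt, l, out_word TD (2 * bits_val u \<le> bits_val v) @ Bl # R)"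
proof -
  have ly: "length y = k + 1 + length w" using y by simp
  obtain E where e: "all_blank E" "reaches md j MP (Start, [], enc y) (prelude_time (length y))
      (MPc (MX TD) 0, [Bl], enc (pair z [True]) @ Bl # E)"
    using prelude_diag[OF md, of j MP k w] y z ly by auto
  obtain l' R where m: "reaches md j MP (MPc (MX TD) 0, [Bl], enc (pair z [True]) @ Bl # E) TT
      (C TD K0, l', enc (pair u v) @ R)"
      "head_sym R = Bl"
    using sim_phase[OF h o, of "[Bl]" "Bl # E" md j "MX TD"] e(1) by auto
  note t1 = reaches_trans[OF e(2) m(1)]
  have "length (pair u v) \<le> length y + 2 * (prelude_time (length y) + TT)"
    using reaches_tape_length[OF t1] by simp
  then have luv: "length u + length v \<le> length y + 2 * (prelude_time (length y) + TT)"
    by (simp add: pair_eq_double_bits')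
  obtain R' where c: "reaches md j MP (C TD K0, l', enc (pair u v) @ R)
      (compare_time (length u + length v))
     (Halt, tl l', out_word TD (2 * bits_val u \<le> bits_val v) @ Bl # R')"
    using compare_phase[OF m(2), of md j MP TD l' u v] by auto
  have "reaches md j MP (Start, [], enc y)
      (prelude_time (length y) + TT + compare_time (length u + length v))
     (Halt, tl l', out_word TD (2 * bits_val u \<le> bits_val v) @ Bl # R')"
    using reaches_trans[OF t1 c] .
  then show ?thesis using compare_time_mono[OF luv] by (intro exI) (elim reaches_conv, simp_all)
qed

lemma run_diag_zeros:
  assumes md: "md = ModeDiag" and y: "True \<notin> set y"
  shows "\<exists>l R. reaches md j MP (Start, [], enc y) (2 * length y + 20) (Halt, l, [S0] @ Bl # R)"
proof (cases y rule: rev_cases)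
  case Nil
  have s1: "reaches md j MP (Start, [], enc y) 5 (D DGR1, [], [S0, S1, S1] @ Bl # [Bl])"
    using start_diag[where md=md and j=j and MP=MP and r="enc y", OF md] Nil by simp
  obtain r' where r2: "reaches md j MP (D DGR1, [], [S0, S1, S1] @ Bl # [Bl])
      (length [S0, S1, S1] + 6) (Halt, rev [S0, S1, S1], S0 # Bl # r')"
    using rejE[of "[S0, S1, S1]" "[Bl]" md j MP] by auto
  show ?thesis using reaches_trans[OF s1 r2] by (intro exI) (elim reaches_conv, simp_all)
next
  case (snoc y1 c)
  have c: "c = False" and y1: "y1 = replicate (length y1) False" using y snoc
    by (auto intro: replicate_eqI)
  have s1: "reaches md j MP (Start, [], enc y) 5
      (D DGR1, [], [S0, S1, S1] @ Bl # (replicate (length y1) S0 @ [S0]) @ [])"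
    using start_diag[where md=md and j=j and MP=MP and r="enc y", OF md] snoc c head_sym_Cons_tl[of "enc y"]
    by (subst (asm) y1) simp
  obtain r' where r2: "reaches md j MP
      (D DGR1, [], [S0, S1, S1] @ Bl # (replicate (length y1) S0 @ [S0]) @ [])
      (2 * length (replicate (length y1) S0) + length [S0, S1, S1] + 8)
          (Halt, rev [S0, S1, S1], S0 # Bl # r')"
    using rejA[of "[S0, S1, S1]" "replicate (length y1) S0" "[]" md j MP] by auto
  show ?thesis using reaches_trans[OF s1 r2] snoc by (intro exI) (elim reaches_conv, simp_all)
qed

lemma run_pred_special:
  assumes md: "md = ModePred" and sp: "special j x"
    and h: "halted (tm_run MP TT (init_conf (pair x [True])))"
    and o: "tm_output (tm_run MP TT (init_conf (pair x [True]))) = pair u v"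
  shows "\<exists>l R. reaches md j MP (Start, [], enc (pair x [b]))
      (4 * length x + 7 + TT + compare_time (2 * length x + 3 + 2 * (4 * length x + 7 + TT)))
     (Halt, l, out_word (TP b) (2 * bits_val u \<le> bits_val v) @ Bl # R)"
proof -
  have s1: "reaches md j MP (Start, [], enc (pair x [b])) (4 * length x + 7)
      (MPc (MX (TP b)) 0, [Bl], enc (pair x [True]) @ [])"
    using scan_pred[OF md, of j MP x b] sp by simp
  obtain l' R where m: "reaches md j MP (MPc (MX (TP b)) 0, [Bl], enc (pair x [True]) @ []) TT
      (C (TP b) K0, l', enc (pair u v) @ R)"
      "head_sym R = Bl"
    using sim_phase[OF h o, of "[Bl]" "[]" md j "MX (TP b)"] by auto
  note t1 = reaches_trans[OF s1 m(1)]
  have "length (pair u v) \<le> 2 * length x + 3 + 2 * (4 * length x + 7 + TT)"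
    using reaches_tape_length[OF t1] by (simp add: pair_eq_double_bits')
  then have luv: "length u + length v \<le> 2 * length x + 3 + 2 * (4 * length x + 7 + TT)"
    by (simp add: pair_eq_double_bits')
  obtain R' where c: "reaches md j MP (C (TP b) K0, l', enc (pair u v) @ R)
      (compare_time (length u + length v))
     (Halt, tl l', out_word (TP b) (2 * bits_val u \<le> bits_val v) @ Bl # R')"
    using compare_phase[OF m(2), of md j MP "TP b" l' u v] by auto
  show ?thesis using reaches_trans[OF t1 c] compare_time_mono[OF luv]
      by (intro exI) (elim reaches_conv, simp_all)
qed

lemma run_pred_plain:
  assumes md: "md = ModePred" and sp: "\<not> special j x"
    and h: "halted (tm_run MP TT (init_conf (pair x [b])))"
    and o: "tm_output (tm_run MP TT (init_conf (pair x [b]))) = pair u v"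
  shows "\<exists>l R. reaches md j MP (Start, [], enc (pair x [b])) (4 * length x + 7 + TT)
     (Halt, l, enc (pair u v) @ R) \<and> head_sym R = Bl"
proof -
  have s1: "reaches md j MP (Start, [], enc (pair x [b])) (4 * length x + 7)
      (MPc MY 0, [Bl], enc (pair x [b]) @ [])"
    using scan_pred[OF md, of j MP x b] sp by simp
  obtain l' R where m: "reaches md j MP (MPc MY 0, [Bl], enc (pair x [b]) @ []) TT
      (Halt, l', enc (pair u v) @ R)"
      "head_sym R = Bl"
    using sim_phase[OF h o, of "[Bl]" "[]" md j MY] by auto
  show ?thesis using reaches_trans[OF s1 m(1)] m(2) by blast
qed

lemma ctrl_tm_result:
  assumes wf: "tm_wf MP" and r: "reaches md j MP (Start, [], enc w) B (Halt, l, rr)" and B: "B \<le> T"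
  shows "halted (tm_run (ctrl_tm md j MP) T (init_conf w)) \<and>
         tm_output (tm_run (ctrl_tm md j MP) T (init_conf w))
             = map (\<lambda>a. a = S1) (takeWhile (\<lambda>a. a \<noteq> Bl) rr)"
proof -
  have g: "grun (ctrl md j MP) Halt T (Start, [], enc w) = (Halt, l, rr)"
    using reaches_grun[OF r _ B] by simp
  have "tm_run (ctrl_tm md j MP) T (init_conf w) = conf_code (Halt, l, rr)"
    using ctrl_tm_run[OF wf, of j "(Start, [], enc w)" md T] g by (simp add: init_conf_code)
  then show ?thesis by (simp add: halted_def conf_code_def tm_output_def)
qed

lemma takeWhile_nonblank: "nonblank xs \<Longrightarrow> head_sym R = Bl \<Longrightarrow> takeWhile (\<lambda>a. a \<noteq> Bl) (xs @ R) = xs"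
  by (induct xs) (auto simp: nonblank_def, cases R, auto)

lemma map_enc[simp]: "map (\<lambda>a. a = S1) (enc p) = p"
  by (induct p) auto

section \<open>Running times\<close>

lemma compare_time_le: "compare_time L \<le> 6 * (L + 3)^2"
  unfolding compare_time_def by (simp add: power2_eq_square algebra_simps)

lemma prelude_time_le: "prelude_time m \<le> 100 * (m + 1)^2"
  unfolding prelude_time_def by (simp add: power2_eq_square algebra_simps)

lemma Suc_sq_le_exp2: "(m + 1)^2 \<le> (2::nat) ^ (2 * (m + 1))"
proof -
  have "m + 1 \<le> 2 ^ (m + 1)" by (induct m) auto
  then have "(m + 1)^2 \<le> (2 ^ (m + 1))^2" by (rule power_mono) simp
  then show ?thesis by (simp add: power_mult[symmetric] mult.commute)
qed

definition steps_const :: "nat \<Rightarrow> nat \<Rightarrow> nat" where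
  "steps_const b K = b + 2 * K + 1 + 6 * (3 * b + 4 * K + 5)^2"

lemma steps_le_sq:
  fixes Q :: nat
  assumes Q: "1 \<le> Q" "n ^ K \<le> Q" and XZ: "X \<le> b * Q" "Z \<le> b * Q"
  shows "X + (K * n ^ K + K) + compare_time (Z + 2 * (X + (K * n ^ K + K))) \<le> steps_const b K * Q^2"
proof -
  have "K * n ^ K \<le> K * Q" using Q(2) by (rule mult_le_mono2)
  moreover have "K \<le> K * Q" using Q(1) by simp
  ultimately have "K * n ^ K + K \<le> K * Q + K * Q" by linarith
  also have "\<dots> \<le> (2 * K + 1) * Q" by (simp add: algebra_simps)
  finally have T: "K * n ^ K + K \<le> (2 * K + 1) * Q" .
  have "Z + 2 * (X + (K * n ^ K + K)) + 3 \<le> (3 * b + 4 * K + 5) * Q"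
    using XZ T Q(1) by (simp add: algebra_simps)
  then have cmp: "compare_time (Z + 2 * (X + (K * n ^ K + K))) \<le> 6 * ((3 * b + 4 * K + 5) * Q)^2"
    using compare_time_le by (meson le_trans mult_le_mono2 power_mono zero_le)
  have QQ: "Q \<le> Q^2" using Q(1) by (simp add: power2_eq_square)
  have "X + (K * n ^ K + K) + compare_time (Z + 2 * (X + (K * n ^ K + K)))
      \<le> b * Q + (2 * K + 1) * Q + 6 * ((3 * b + 4 * K + 5) * Q)^2"
    using XZ(1) T cmp by linarith
  also have "\<dots> \<le> b * Q^2 + (2 * K + 1) * Q^2 + 6 * ((3 * b + 4 * K + 5) * Q)^2"
    by (intro add_mono mult_le_mono2 QQ le_refl)
  also have "\<dots> = steps_const b K * Q^2"
    unfolding steps_const_def power_mult_distrib by (simp add: algebra_simps)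
  finally show ?thesis .
qed

lemma diag_steps_le_exp:
  assumes n: "n < 2 ^ (3 * m + 3)"
  shows "prelude_time m + (K * n ^ K + K) + compare_time
      (m + 2 * (prelude_time m + (K * n ^ K + K)))
    \<le> (steps_const 100 K * 2 ^ (2 * (3 * K + 2))) * 2 ^ (2 * (3 * K + 2) * m)"
proof -
  define Q :: nat where "Q = 2 ^ ((3 * K + 2) * (m + 1))"
  have "(m + 1)^2 \<le> 2 ^ (2 * (m + 1))" by (rule Suc_sq_le_exp2)
  also have "\<dots> \<le> Q" unfolding Q_def by (intro power_increasing) auto
  finally have mQ: "(m + 1)^2 \<le> Q" .
  then have "m \<le> Q" by (metis le_add1 le_trans power2_nat_le_imp_le)
  have "n ^ K \<le> (2 ^ (3 * m + 3)) ^ K" using n by (intro power_mono) auto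
  also have "\<dots> = 2 ^ ((3 * m + 3) * K)" by (simp add: power_mult)
  also have "\<dots> \<le> Q" unfolding Q_def by (intro power_increasing) (auto simp: algebra_simps)
  finally have "n ^ K \<le> Q" .
  moreover have "1 \<le> Q" unfolding Q_def by simp
  moreover have "prelude_time m \<le> 100 * Q" using prelude_time_le[of m] mQ by linarith
  ultimately have "prelude_time m + (K * n ^ K + K) + compare_time
      (m + 2 * (prelude_time m + (K * n ^ K + K)))
      \<le> steps_const 100 K * Q^2"
    using \<open>m \<le> Q\<close> by (intro steps_le_sq) auto
  also have "Q^2 = 2 ^ (2 * (3 * K + 2)) * 2 ^ (2 * (3 * K + 2) * m)"
    unfolding Q_def by (simp add: power_mult[symmetric] power_add[symmetric] algebra_simps)
  finally show ?thesis by (simp add: algebra_simps)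
qed

lemma mult_sq_pow_le_poly:
  fixes A K n :: nat
  assumes "1 \<le> A"
  shows "A * ((n + 1) ^ (K + 1))^2
      \<le> (A * 2 ^ (2 * K + 2)) * n ^ (A * 2 ^ (2 * K + 2)) + A * 2 ^ (2 * K + 2)"
proof (cases "n = 0")
  case False
  let ?k = "A * 2 ^ (2 * K + 2)"
  have e: "2 * K + 2 = (K + 1) * 2" by simp
  have "((n + 1) ^ (K + 1))^2 = (n + 1) ^ (2 * K + 2)"
    unfolding e by (rule power_mult[symmetric])
  also have "\<dots> \<le> (2 * n) ^ (2 * K + 2)" using False by (intro power_mono) auto
  also have "\<dots> = 2 ^ (2 * K + 2) * n ^ (2 * K + 2)" by (simp add: power_mult_distrib)
  also have "\<dots> \<le> 2 ^ (2 * K + 2) * n ^ ?k"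
  proof -
    have "2 * K + 2 < 2 ^ (2 * K + 2)" by (rule less_exp)
    also have "\<dots> \<le> ?k" using mult_le_mono1[OF assms, of "2 ^ (2 * K + 2)"] by simp
    finally show ?thesis using False by (intro mult_le_mono2 power_increasing) auto
  qed
  finally have "A * ((n + 1) ^ (K + 1))^2 \<le> A * (2 ^ (2 * K + 2) * n ^ ?k)" by (rule mult_le_mono2)
  moreover have "A * (2 ^ (2 * K + 2) * n ^ ?k) = ?k * n ^ ?k" by (simp only: mult.assoc)
  ultimately show ?thesis by linarith
next
  case True
  have "A \<le> A * 2 ^ (2 * K + 2)" by simp
  also have "\<dots> \<le> (A * 2 ^ (2 * K + 2)) * n ^ (A * 2 ^ (2 * K + 2)) + A * 2 ^ (2 * K + 2)"
      by (rule le_add2)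
  finally show ?thesis using True by simp
qed

definition diag_pred_exp :: "nat \<Rightarrow> nat" where "diag_pred_exp K = steps_const 11 K * 2 ^ (2 * K + 2)"

lemma diag_pred_steps_le_poly:
  assumes lx: "lx \<le> n"
  shows "4 * lx + 7 + (K * n ^ K + K) + compare_time
      (2 * lx + 3 + 2 * (4 * lx + 7 + (K * n ^ K + K)))
    \<le> diag_pred_exp K * n ^ diag_pred_exp K + diag_pred_exp K"
proof -
  define Y :: nat where "Y = (n + 1) ^ (K + 1)"
  have "1 \<le> Y" unfolding Y_def by (rule one_le_power) simp
  moreover have "n + 1 \<le> Y" unfolding Y_def using power_increasing[of 1 "K + 1" "n + 1"] by simp
  moreover have "n ^ K \<le> (n + 1) ^ K" by (intro power_mono) auto
  then have "n ^ K \<le> Y" unfolding Y_def using power_increasing[of K "K + 1" "n + 1"] by simp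
  ultimately have "4 * lx + 7 + (K * n ^ K + K) + compare_time
      (2 * lx + 3 + 2 * (4 * lx + 7 + (K * n ^ K + K)))
      \<le> steps_const 11 K * Y^2"
    using lx by (intro steps_le_sq) auto
  also have "\<dots> \<le> diag_pred_exp K * n ^ diag_pred_exp K + diag_pred_exp K"
    unfolding Y_def diag_pred_exp_def by (rule mult_sq_pow_le_poly) (simp add: steps_const_def)
  finally show ?thesis .
qed

section \<open>The diagonal machine and the diagonal predictor\<close>

definition outputs_frac :: "tm \<Rightarrow> nat \<Rightarrow> bool list \<Rightarrow> real \<Rightarrow> bool" where
  "outputs_frac M T x p \<longleftrightarrow> (\<exists>u v. halted (tm_run M T (init_conf x)) \<and>
     tm_output (tm_run M T (init_conf x)) = pair u v \<and> bits_val v > 0 \<and> p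
         = real (bits_val u) / real (bits_val v))"

definition computes_pred :: "tm \<Rightarrow> nat \<Rightarrow> (bool list \<Rightarrow> bool \<Rightarrow> real) \<Rightarrow> bool" where
  "computes_pred MP K P \<longleftrightarrow> (\<forall>n b. outputs_frac MP (K * n ^ K + K) (pair (s n) [b]) (P (s n) b))"

lemma ptime_pred_prob:
  assumes "ptime_pred P"
  shows "P x False + P x True = 1" "0 \<le> P x b" "P x b \<le> 1"
  using assms unfolding ptime_pred_def by blast+

lemma ptime_predE: "ptime_pred P \<Longrightarrow> \<exists>MP K. tm_wf MP \<and> computes_pred MP K P"
  unfolding ptime_pred_def computes_pred_def outputs_frac_def by blast

lemma ptime_predI:
  assumes "\<And>x. P x False + P x True = 1" "\<And>x b. 0 \<le> P x b" "\<And>x b. P x b \<le> 1"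
    and "tm_wf M" "\<And>n b. outputs_frac M (k * n ^ k + k) (pair (s n) [b]) (P (s n) b)"
  shows "ptime_pred P"
  using assms unfolding ptime_pred_def outputs_frac_def by blast

lemma computes_pred_at:
  "computes_pred MP K P \<Longrightarrow> outputs_frac MP (K * str_index x ^ K + K) (pair x [b]) (P x b)"
  unfolding computes_pred_def by (metis s_str_index)

lemma frac_le_half_iff: "0 < v \<Longrightarrow> (real u / real v \<le> 1 / 2) \<longleftrightarrow> 2 * u \<le> v"
proof -
  assume "0 < v"
  then have "(real u / real v \<le> 1 / 2) \<longleftrightarrow> real (2 * u) \<le> real v" by (simp add: field_simps)
  then show ?thesis by (simp only: of_nat_le_iff)
qed

definition diag_const :: "nat \<Rightarrow> nat" where
  "diag_const K = steps_const 100 K * 2 ^ (2 * (3 * K + 2))"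

definition diag_time :: "nat \<Rightarrow> nat \<Rightarrow> nat" where "diag_time K m
    = diag_const K * 2 ^ (diag_const K * m) + diag_const K"

lemma diag_const_ge: "2 * (3 * K + 2) \<le> diag_const K" "20 \<le> diag_const K"
proof -
  have "2 * (3 * K + 2) < 2 ^ (2 * (3 * K + 2))" by (rule less_exp)
  also have "\<dots> \<le> diag_const K" unfolding diag_const_def by (simp add: steps_const_def)
  finally show "2 * (3 * K + 2) \<le> diag_const K" by simp
  have "20 \<le> steps_const 100 K" by (simp add: steps_const_def)
  also have "\<dots> \<le> diag_const K" unfolding diag_const_def by simp
  finally show "20 \<le> diag_const K" .
qed

lemma diag_time_marked: "n < 2 ^ (3 * m + 3) \<Longrightarrow>
   prelude_time m + (K * n ^ K + K) + compare_time (m + 2 * (prelude_time m + (K * n ^ K + K)))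
       \<le> diag_time K m"
proof -
  assume n: "n < 2 ^ (3 * m + 3)"
  let ?c0 = "2 * (3 * K + 2)"
  have "prelude_time m + (K * n ^ K + K) + compare_time (m + 2 * (prelude_time m + (K * n ^ K + K)))
     \<le> (steps_const 100 K * 2 ^ ?c0) * 2 ^ (?c0 * m)"
    by (rule diag_steps_le_exp[OF n])
  also have "\<dots> = diag_const K * 2 ^ (?c0 * m)" by (simp add: diag_const_def)
  also have "\<dots> \<le> diag_const K * 2 ^ (diag_const K * m)"
    using diag_const_ge(1)[of K] by (intro mult_le_mono2 power_increasing mult_le_mono1) auto
  finally show ?thesis unfolding diag_time_def by simp
qed

lemma diag_time_zeros: "2 * m + 20 \<le> diag_time K m"
proof -
  have "m + 1 \<le> 2 ^ m" by (induct m) auto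
  also have "\<dots> \<le> 2 ^ (diag_const K * m)" using diag_const_ge(2)[of K]
      by (intro power_increasing) auto
  finally have "20 * (m + 1) \<le> diag_const K * 2 ^ (diag_const K * m)" using diag_const_ge(2)[of K]
      by (intro mult_le_mono) auto
  then show ?thesis unfolding diag_time_def by simp
qed

definition diag_tm :: "tm \<Rightarrow> tm" where "diag_tm MP = ctrl_tm ModeDiag 0 MP"

lemma str_index_pair_bound:
  assumes "y = replicate k False @ True # w"
  shows "str_index (pair (replicate k False) y) < 2 ^ (3 * length y + 3)"
proof -
  have "str_index (pair (replicate k False) y) < 2 ^ (length (pair (replicate k False) y) + 1) -
      1" by (rule str_index_bound)
  also have "\<dots> \<le> 2 ^ (3 * length y + 3)"
  proof -
    have "length (pair (replicate k False) y) + 1 \<le> 3 * length y + 3" using assms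
        by (simp add: pair_eq_double_bits')
    then have "(2::nat) ^ (length (pair (replicate k False) y) + 1) \<le> 2 ^ (3 * length y + 3)"
        by (intro power_increasing) auto
    then show ?thesis by simp
  qed
  finally show ?thesis .
qed

lemma diag_tm_on_marked:
  assumes wf: "tm_wf MP" and hp: "computes_pred MP K P"
    and y: "y = replicate k False @ True # w"
  shows "halted (tm_run (diag_tm MP) (diag_time K (length y)) (init_conf y)) \<and>
     tm_output (tm_run (diag_tm MP) (diag_time K (length y)) (init_conf y))
         = [P (pair (replicate k False) y) True \<le> 1 / 2]"
proof -
  let ?z = "pair (replicate k False) y"
  let ?n = "str_index ?z"
  obtain u v where uv: "halted (tm_run MP (K * ?n ^ K + K) (init_conf (pair ?z [True])))"
    "tm_output (tm_run MP (K * ?n ^ K + K) (init_conf (pair ?z [True]))) = pair u v"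
    "bits_val v > 0" "P ?z True = real (bits_val u) / real (bits_val v)"
    using computes_pred_at[OF hp, of ?z True] unfolding outputs_frac_def by blast
  obtain l R where r: "reaches ModeDiag 0 MP (Start, [], enc y)
      (prelude_time (length y) + (K * ?n ^ K + K) + compare_time
      (length y + 2 * (prelude_time (length y) + (K * ?n ^ K + K))))
     (Halt, l, out_word TD (2 * bits_val u \<le> bits_val v) @ Bl # R)"
    using run_diag_marked[OF refl y refl uv(1,2)] by blast
  have b: "prelude_time (length y) + (K * ?n ^ K + K) + compare_time
      (length y + 2 * (prelude_time (length y) + (K * ?n ^ K + K))) \<le> diag_time K (length y)"
    by (rule diag_time_marked) (rule str_index_pair_bound[OF y])
  have "halted (tm_run (diag_tm MP) (diag_time K (length y)) (init_conf y)) \<and>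
     tm_output (tm_run (diag_tm MP) (diag_time K (length y)) (init_conf y))
         = map (\<lambda>a. a = S1) (takeWhile (\<lambda>a. a \<noteq> Bl)
         (out_word TD (2 * bits_val u \<le> bits_val v) @ Bl # R))"
    unfolding diag_tm_def by (rule ctrl_tm_result[OF wf r b])
  moreover have "map (\<lambda>a. a = S1)
      (takeWhile (\<lambda>a. a \<noteq> Bl) (out_word TD (2 * bits_val u \<le> bits_val v) @ Bl # R))
      = [2 * bits_val u \<le> bits_val v]"
    by simp
  moreover have "(2 * bits_val u \<le> bits_val v) = (P ?z True \<le> 1 / 2)"
      using uv(3,4) frac_le_half_iff by simp
  ultimately show ?thesis by simp
qed

lemma diag_tm_on_zeros:
  assumes wf: "tm_wf MP" and y: "True \<notin> set y"
  shows "halted (tm_run (diag_tm MP) (diag_time K (length y)) (init_conf y)) \<and>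
     tm_output (tm_run (diag_tm MP) (diag_time K (length y)) (init_conf y)) = [False]"
proof -
  obtain l R where r: "reaches ModeDiag 0 MP (Start, [], enc y) (2 * length y + 20)
      (Halt, l, [S0] @ Bl # R)"
    using run_diag_zeros[OF refl y] by blast
  show ?thesis unfolding diag_tm_def using ctrl_tm_result[OF wf r diag_time_zeros] by simp
qed

lemma split_first_True: "True \<in> set y \<Longrightarrow> \<exists>k w. y = replicate k False @ True # w"
proof -
  assume "True \<in> set y"
  then obtain ys zs where "y = ys @ True # zs" "True \<notin> set ys" by (metis split_list_first)
  moreover then have "ys = replicate (length ys) False" by (auto intro: replicate_eqI)
  ultimately show ?thesis by metis
qed

lemma diag_tm_lang_in_E:
  assumes wf: "tm_wf MP" and hp: "computes_pred MP K P"
  shows "tm_lang (diag_tm MP) \<in> E_class"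
proof -
  have "runs_in (diag_tm MP) (\<lambda>m. diag_const K * 2 ^ (diag_const K * m) + diag_const K)"
    unfolding runs_in_def
  proof
    fix y
    show "halted (tm_run (diag_tm MP)
        (diag_const K * 2 ^ (diag_const K * length y) + diag_const K) (init_conf y)) \<and>
          tm_output (tm_run (diag_tm MP) (diag_const K * 2 ^ (diag_const K * length y) +
              diag_const K) (init_conf y)) \<in> {[True], [False]}"
    proof (cases "True \<in> set y")
      case True
      then obtain k w where "y = replicate k False @ True # w" using split_first_True by blast
      from diag_tm_on_marked[OF wf hp this] show ?thesis unfolding diag_time_def by auto
    next
      case False
      from diag_tm_on_zeros[OF wf False, of K] show ?thesis unfolding diag_time_def by auto
    qed
  qed
  moreover have "tm_wf (diag_tm MP)" unfolding diag_tm_def by (rule ctrl_tm_wf[OF wf])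
  ultimately show ?thesis unfolding E_class_def by blast
qed

lemma tm_run_halted_eq: "halted (tm_run M t c) \<Longrightarrow> halted (tm_run M t' c) \<Longrightarrow> tm_run M t c
    = tm_run M t' c"
  by (metis halted_def le_cases tm_run_halted)

lemma diag_tm_accepts_iff:
  assumes wf: "tm_wf MP" and hp: "computes_pred MP K P"
    and y: "y = replicate k False @ True # w"
  shows "tm_accepts (diag_tm MP) y \<longleftrightarrow> P (pair (replicate k False) y) True \<le> 1 / 2"
proof -
  note b = diag_tm_on_marked[OF wf hp y]
  show ?thesis
  proof
    assume "tm_accepts (diag_tm MP) y"
    then obtain t where t: "halted (tm_run (diag_tm MP) t (init_conf y))" "tm_output
        (tm_run (diag_tm MP) t (init_conf y)) = [True]"
      unfolding tm_accepts_def by blast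
    have "tm_run (diag_tm MP) t (init_conf y)
        = tm_run (diag_tm MP) (diag_time K (length y)) (init_conf y)"
      using tm_run_halted_eq t(1) b by blast
    then show "P (pair (replicate k False) y) True \<le> 1 / 2" using t(2) b by simp
  next
    assume "P (pair (replicate k False) y) True \<le> 1 / 2"
    then show "tm_accepts (diag_tm MP) y" unfolding tm_accepts_def using b by auto
  qed
qed

definition diag_pred :: "(bool list \<Rightarrow> bool \<Rightarrow> real) \<Rightarrow> nat \<Rightarrow> bool list \<Rightarrow> bool \<Rightarrow> real" where
  "diag_pred P j x b = (if special j x then (if b = (P x True \<le> 1 / 2) then 1 else 0) else P x b)"

lemma bits_val_simps: "bits_val [True] = 1" "bits_val [True, False] = 2" "bits_val [] = 0"
  by (simp_all add: bits_val_def)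

lemma diag_pred_computed_special:
  assumes wf: "tm_wf MP" and hp: "computes_pred MP K P" and sp: "special j (s n)"
  shows "outputs_frac (ctrl_tm ModePred j MP)
      (diag_pred_exp K * n ^ diag_pred_exp K + diag_pred_exp K)
    (pair (s n) [b]) (diag_pred P j (s n) b)"
proof -
  let ?x = "s n"
  let ?TT = "K * n ^ K + K"
  obtain u v where uv: "halted (tm_run MP ?TT (init_conf (pair ?x [True])))"
      "tm_output (tm_run MP ?TT (init_conf (pair ?x [True]))) = pair u v"
      "bits_val v > 0" "P ?x True = real (bits_val u) / real (bits_val v)"
    using hp unfolding computes_pred_def outputs_frac_def by blast
  let ?g = "2 * bits_val u \<le> bits_val v"
  obtain l R where r: "reaches ModePred j MP (Start, [], enc (pair ?x [b]))
      (4 * length ?x + 7 + ?TT + compare_time (2 * length ?x + 3 + 2 * (4 * length ?x + 7 + ?TT)))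
      (Halt, l, out_word (TP b) ?g @ Bl # R)"
    using run_pred_special[OF refl sp uv(1,2)] by blast
  note res = ctrl_tm_result[OF wf r diag_pred_steps_le_poly[OF s_length_le]]
  have g: "?g = (P ?x True \<le> 1 / 2)" using uv(3,4) frac_le_half_iff by simp
  have o: "map (\<lambda>a. a = S1) (takeWhile (\<lambda>a. a \<noteq> Bl) (out_word (TP b) ?g @ Bl # R))
      = (if b = ?g then pair [True] [True] else pair [] [True])"
    by (simp add: pair_def)
  show ?thesis
  proof (cases "b = ?g")
    case True
    then show ?thesis unfolding outputs_frac_def using res o g sp
      by (intro exI[of _ "[True]"] exI[of _ "[True]"]) (simp add: diag_pred_def bits_val_simps)
  next
    case False
    then show ?thesis unfolding outputs_frac_def using res o g sp
      by (intro exI[of _ "[]"] exI[of _ "[True]"]) (simp add: diag_pred_def bits_val_simps)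
  qed
qed

lemma diag_pred_computed_plain:
  assumes wf: "tm_wf MP" and hp: "computes_pred MP K P" and sp: "\<not> special j (s n)"
  shows "outputs_frac (ctrl_tm ModePred j MP)
      (diag_pred_exp K * n ^ diag_pred_exp K + diag_pred_exp K)
    (pair (s n) [b]) (diag_pred P j (s n) b)"
proof -
  let ?x = "s n"
  let ?TT = "K * n ^ K + K"
  obtain u v where uv: "halted (tm_run MP ?TT (init_conf (pair ?x [b])))"
      "tm_output (tm_run MP ?TT (init_conf (pair ?x [b]))) = pair u v"
      "bits_val v > 0" "P ?x b = real (bits_val u) / real (bits_val v)"
    using hp unfolding computes_pred_def outputs_frac_def by blast
  obtain l R where r: "reaches ModePred j MP (Start, [], enc (pair ?x [b]))
      (4 * length ?x + 7 + ?TT)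
      (Halt, l, enc (pair u v) @ R)" "head_sym R = Bl"
    using run_pred_plain[OF refl sp uv(1,2)] by blast
  have "4 * length ?x + 7 + ?TT \<le> diag_pred_exp K * n ^ diag_pred_exp K + diag_pred_exp K"
    using diag_pred_steps_le_poly[OF s_length_le, of n K] by linarith
  note res = ctrl_tm_result[OF wf r(1) this]
  have "takeWhile (\<lambda>a. a \<noteq> Bl) (enc (pair u v) @ R) = enc (pair u v)"
    using r(2) by (intro takeWhile_nonblank) simp_all
  then show ?thesis unfolding outputs_frac_def using res uv sp
    by (intro exI[of _ u] exI[of _ v]) (simp add: diag_pred_def)
qed

lemma ptime_diag_pred:
  assumes pt: "ptime_pred P" and wf: "tm_wf MP" and hp: "computes_pred MP K P"
  shows "ptime_pred (diag_pred P j)"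
proof (rule ptime_predI)
  show "diag_pred P j x False + diag_pred P j x True = 1" for x
    using ptime_pred_prob(1)[OF pt, of x] by (simp add: diag_pred_def)
  show "0 \<le> diag_pred P j x b" "diag_pred P j x b \<le> 1" for x b
    using ptime_pred_prob(2,3)[OF pt, of x b] by (auto simp: diag_pred_def)
  show "tm_wf (ctrl_tm ModePred j MP)" by (rule ctrl_tm_wf[OF wf])
  show "outputs_frac (ctrl_tm ModePred j MP)
      (diag_pred_exp K * n ^ diag_pred_exp K + diag_pred_exp K)
      (pair (s n) [b]) (diag_pred P j (s n) b)" for n b
    using diag_pred_computed_special[OF wf hp] diag_pred_computed_plain[OF wf hp] by blast
qed

lemma ptime_half: "ptime_pred (\<lambda>x b. 1 / 2)"
proof -
  define MP where "MP = \<lparr>nstates = 2, delta = \<lambda>q a. (1, a, Stay)\<rparr>"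
  have wf: "tm_wf MP" by (simp add: MP_def tm_wf_def)
  have "outputs_frac (ctrl_tm ModeHalf 0 MP) (14 * n ^ 14 + 14) (pair (s n) [b]) (1 / 2)" for n b
  proof -
    obtain R' where r: "reaches ModeHalf 0 MP (Start, [], enc (pair (s n) [b])) 14
        (Halt, [], [S1, S1, S0, S1, S1, S0] @ Bl # R')"
      using run_half[OF refl, of "enc (pair (s n) [b])" 0 MP] by (auto simp: pair_def)
    note res = ctrl_tm_result[OF wf r, of "14 * n ^ 14 + 14"]
    have "map (\<lambda>a. a = S1) (takeWhile (\<lambda>a. a \<noteq> Bl) ([S1, S1, S0, S1, S1, S0] @ Bl # R'))
        = pair [True] [True, False]"
      by (simp add: pair_def)
    then show ?thesis unfolding outputs_frac_def using res
      by (intro exI[of _ "[True]"] exI[of _ "[True, False]"]) (simp add: bits_val_simps)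
  qed
  then show ?thesis by (intro ptime_predI[OF _ _ _ ctrl_tm_wf[OF wf]]) auto
qed

section \<open>Depth of the E-halting language\<close>

lemma prod_ge_pow2:
  fixes f :: "nat \<Rightarrow> real"
  assumes "\<And>i. i < n \<Longrightarrow> 1 \<le> f i" "\<And>i. i \<in> S \<Longrightarrow> 2 \<le> f i" "S \<subseteq> {..<n}"
  shows "2 ^ card S \<le> (\<Prod>i<n. f i)"
proof -
  have "(\<Prod>i<n. f i) = (\<Prod>i\<in>{..<n} - S. f i) * (\<Prod>i\<in>S. f i)"
    using prod.subset_diff[OF assms(3)] by simp
  moreover have "1 \<le> (\<Prod>i\<in>{..<n} - S. f i)" using assms(1) by (intro prod_ge_1) auto
  moreover have "(2::real) ^ card S \<le> (\<Prod>i\<in>S. f i)"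
  proof -
    have "(\<Prod>i\<in>S. (2::real)) \<le> (\<Prod>i\<in>S. f i)" using assms(2) by (intro prod_mono) auto
    then show ?thesis by simp
  qed
  moreover have "0 \<le> (\<Prod>i\<in>S. f i)" using assms(2) by (intro prod_nonneg) (smt (verit))
  ultimately show ?thesis by (metis mult_left_mono mult_1 order_trans mult.commute)
qed

lemma H_E_special_iff:
  assumes lang: "tm_lang (M j) = tm_lang (diag_tm MP)" and j: "j \<ge> 1"
    and wf: "tm_wf MP" and hp: "computes_pred MP K P"
    and sp: "special j x"
  shows "x \<in> H_E M \<longleftrightarrow> P x True \<le> 1 / 2"
proof -
  obtain w where x: "x = pair (replicate j False) (replicate j False @ True # w)"
    using sp unfolding special_def by blast
  let ?y = "replicate j False @ True # w"
  have "x \<in> H_E M \<longleftrightarrow> tm_accepts (M j) ?y"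
  proof
    assume "x \<in> H_E M"
    then obtain i x' where ix: "x = pair (replicate i False) x'" "i \<ge> 1" "tm_accepts (M i) x'"
      unfolding H_E_def by blast
    then have "replicate i False = replicate j False \<and> x' = ?y" using x pair_inj by metis
    then have "i = j" "x' = ?y" by (metis length_replicate)+
    then show "tm_accepts (M j) ?y" using ix by simp
  next
    assume "tm_accepts (M j) ?y"
    then show "x \<in> H_E M" unfolding H_E_def using x j by blast
  qed
  also have "\<dots> \<longleftrightarrow> tm_accepts (diag_tm MP) ?y"
    using lang unfolding tm_lang_def by (metis mem_Collect_eq)
  also have "\<dots> \<longleftrightarrow> P (pair (replicate j False) ?y) True \<le> 1 / 2"
    by (rule diag_tm_accepts_iff[OF wf hp refl])
  finally show ?thesis using x by simp
qed

lemma card_special_below: "2 ^ t \<le> card {i. i < 2 ^ (3 * j + t + 4) - 1 \<and> special j (s i)}"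
proof -
  let ?x = "\<lambda>w. pair (replicate j False) (replicate j False @ True # w)"
  have "inj_on (\<lambda>w. str_index (?x w)) {w. length w = t}"
    by (rule inj_onI) (metis s_str_index pair_inj same_append_eq list.inject)
  then have card: "card ((\<lambda>w. str_index (?x w)) ` {w. length w = t}) = 2 ^ t"
    using card_lists_length_eq[of "UNIV :: bool set" t] by (simp add: card_image)
  have "(\<lambda>w. str_index (?x w)) ` {w. length w = t} \<subseteq> {i. i < 2 ^ (3 * j + t + 4) - 1
      \<and> special j (s i)}"
  proof
    fix i assume "i \<in> (\<lambda>w. str_index (?x w)) ` {w. length w = t}"
    then obtain w where w: "length w = t" "i = str_index (?x w)" by blast
    then have "i < 2 ^ (3 * j + t + 4) - 1"
      using str_index_bound[of "?x w"] by (simp add: pair_eq_double_bits' power_add mult.commute)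
    moreover have "special j (s i)" using w unfolding special_def by auto
    ultimately show "i \<in> {i. i < 2 ^ (3 * j + t + 4) - 1 \<and> special j (s i)}" by simp
  qed
  from card_mono[OF _ this] show ?thesis unfolding card by simp
qed

lemma double_le_exp2: "2 * t \<le> (2::nat) ^ t"
proof (induct t)
  case (Suc t) then show ?case by (cases t) auto
qed simp

lemma frequently_log_le_card_special:
  "\<exists>\<^sub>\<infinity>n. log 2 (real n) \<le> real (card {i. i < n \<and> special j (s i)})"
  unfolding cofinite_eq_sequentially frequently_sequentially
proof
  fix m
  define t where "t = m + 3 * j + 4"
  define n :: nat where "n = 2 ^ (3 * j + t + 4) - 1"
  have "t + 1 < 2 ^ (t + 1)" by (rule less_exp)
  also have "\<dots> \<le> 2 ^ (3 * j + t + 4)" by (intro power_increasing) auto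
  finally have "m < n" unfolding n_def t_def by simp
  have "real n < 2 ^ (3 * j + t + 4)" unfolding n_def by (simp add: of_nat_diff)
  then have "log 2 (real n) < log 2 (2 ^ (3 * j + t + 4))"
    using \<open>m < n\<close> by (intro log_less) auto
  also have "\<dots> = 3 * j + t + 4" by simp
  also have "3 * j + t + 4 \<le> 2 * t" unfolding t_def by simp
  also have "\<dots> \<le> 2 ^ t" by (rule double_le_exp2)
  also have "\<dots> \<le> card {i. i < n \<and> special j (s i)}"
    unfolding n_def by (rule card_special_below)
  finally show "\<exists>n\<ge>m. log 2 (real n) \<le> real (card {i. i < n \<and> special j (s i)})"
    using \<open>m < n\<close> by (intro exI[of _ n]) auto
qed

lemma frequently_ratio_ge_const_half:
  assumes "P (s i) (s i \<in> L) = 0"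
  shows "\<exists>\<^sub>\<infinity>n. ratio_ge (pom (\<lambda>x b. 1 / 2) L n) (pom P L n) (r n)"
  unfolding cofinite_eq_sequentially frequently_sequentially
proof
  fix m
  have "pom P L (Suc (max m i)) = 0"
    unfolding pom_def using assms by (subst prod_zero) (auto intro!: bexI[of _ i])
  moreover have "pom (\<lambda>x b. 1 / 2) L n = 1" for n
    unfolding pom_def by (simp add: power_one_over[symmetric] power_mult_distrib[symmetric])
  ultimately show "\<exists>n\<ge>m. ratio_ge (pom (\<lambda>x b. 1 / 2) L n) (pom P L n) (r n)"
    by (intro exI[of _ "Suc (max m i)"]) (simp add: ratio_ge_def)
qed

lemma diag_pred_ratio_ge:
  assumes prob: "\<And>x. P x False + P x True = 1"
    and pos: "\<And>i. 0 < P (s i) (s i \<in> L)"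
    and special_iff: "\<And>x. special j x \<Longrightarrow> x \<in> L \<longleftrightarrow> P x True \<le> 1 / 2"
  shows "2 ^ card {i. i < n \<and> special j (s i)} \<le> pom (diag_pred P j) L n / pom P L n"
proof -
  define f where "f i = diag_pred P j (s i) (s i \<in> L) / P (s i) (s i \<in> L)" for i
  have special_ge: "2 \<le> f i" if sp: "special j (s i)" for i
  proof -
    have "P (s i) (s i \<in> L) \<le> 1 / 2"
      using special_iff[OF sp] prob[of "s i"] by (cases "s i \<in> L") auto
    moreover have "diag_pred P j (s i) (s i \<in> L) = 1"
      using special_iff[OF sp] sp by (simp add: diag_pred_def)
    ultimately show ?thesis using pos[of i] by (simp add: f_def field_simps)
  qed
  moreover have "1 \<le> f i" for i
  proof (cases "special j (s i)")
    case True then show ?thesis using special_ge[of i] by simp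
  next
    case False then show ?thesis using pos[of i] by (simp add: f_def diag_pred_def)
  qed
  ultimately have "2 ^ card {i. i < n \<and> special j (s i)} \<le> (\<Prod>i<n. f i)"
    by (intro prod_ge_pow2) auto
  also have "(\<Prod>i<n. f i) = pom (diag_pred P j) L n / pom P L n"
    using pos unfolding pom_def f_def by (simp add: prod_dividef)
  finally show ?thesis .
qed

lemma frequently_diag_pred_ratio_ge_log:
  assumes prob: "\<And>x. P x False + P x True = 1"
    and pos: "\<And>i. 0 < P (s i) (s i \<in> L)"
    and special_iff: "\<And>x. special j x \<Longrightarrow> x \<in> L \<longleftrightarrow> P x True \<le> 1 / 2"
  shows "\<exists>\<^sub>\<infinity>n. ratio_ge (pom (diag_pred P j) L n) (pom P L n) (log 2 (real n))"
proof -
  have "log 2 (real n) \<le> pom (diag_pred P j) L n / pom P L n"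
    if "log 2 (real n) \<le> real (card {i. i < n \<and> special j (s i)})" for n
  proof -
    have "real (card {i. i < n \<and> special j (s i)}) \<le> 2 ^ card {i. i < n \<and> special j (s i)}"
      using less_exp[of "card {i. i < n \<and> special j (s i)}"]
      by (metis less_imp_le of_nat_le_iff of_nat_numeral of_nat_power)
    also have "\<dots> \<le> pom (diag_pred P j) L n / pom P L n"
      by (rule diag_pred_ratio_ge[OF prob pos special_iff])
    finally show ?thesis using that by linarith
  qed
  moreover have "pom P L n \<noteq> 0" for n
    unfolding pom_def using pos by (simp add: less_imp_neq[symmetric])
  ultimately show ?thesis
    using frequently_log_le_card_special[of j] by (elim frequently_elim1) (simp add: ratio_ge_def)
qed

theorem corollary2:
  fixes M :: "nat \<Rightarrow> tm"
  assumes "\<forall>i \<ge> 1. tm_wf (M i) \<and> runs_in (M i) (\<lambda>m. 2 ^ (i * m))"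
    and "\<forall>L \<in> E_class. \<exists>i \<ge> 1. tm_lang (M i) = L"
  shows "ptime_deep (H_E M)"
  unfolding ptime_deep_def
proof (intro exI[of _ 1] conjI allI impI)
  show "(0::real) < 1" by simp
  fix P assume P: "ptime_pred P"
  let ?L = "H_E M"
  show "\<exists>P'. ptime_pred P' \<and> (\<exists>\<^sub>\<infinity>n. ratio_ge (pom P' ?L n) (pom P ?L n) (1 * log 2 (real n)))"
  proof (cases "\<exists>i. P (s i) (s i \<in> ?L) = 0")
    case True
    then obtain i where "P (s i) (s i \<in> ?L) = 0" by blast
    from frequently_ratio_ge_const_half[where P = P and L = ?L, OF this] show ?thesis
      by (intro exI[of _ "\<lambda>x b. 1 / 2"] conjI ptime_half)
  next
    case False
    then have pos: "0 < P (s i) (s i \<in> ?L)" for i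
      using ptime_pred_prob(2)[OF P, of "s i" "s i \<in> ?L"] by (simp add: less_le)
    obtain MP K where MP: "tm_wf MP" "computes_pred MP K P" using ptime_predE[OF P] by blast
    obtain j where j: "j \<ge> 1" "tm_lang (M j) = tm_lang (diag_tm MP)"
      using assms(2) diag_tm_lang_in_E[OF MP] by blast
    have "special j x \<Longrightarrow> x \<in> ?L \<longleftrightarrow> P x True \<le> 1 / 2" for x
      by (rule H_E_special_iff[where M = M, OF j(2) j(1) MP])
    from frequently_diag_pred_ratio_ge_log[OF ptime_pred_prob(1)[OF P] pos this]
    show ?thesis by (intro exI[of _ "diag_pred P j"] conjI ptime_diag_pred[OF P MP]) simp
  qed
qed

end
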